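(* (a) Let $p\ge0$, let $\mathrm{X},\mathrm{Y}$ be locally compact Hausdorff spaces and let $T:C_0(\mathrm{X})_{+,1}\to C_0(\mathrm{Y})_{+,1}$ preserve the norm of the power mean $\mathfrak{m}^p$ of arbitrary finitely many elements, i.e. $\|Tf_1\,\mathfrak{m}^p\cdots\mathfrak{m}^p\,Tf_n\|=\|f_1\,\mathfrak{m}^p\cdots\mathfrak{m}^p\,f_n\|$ for all $n$ and $f_1,\dots,f_n$. (b) Or let $p<0$, let $\mathrm{X},\mathrm{Y}$ be compact Hausdorff spaces and let $T:C(\mathrm{X})^{-1}_{+,1}\to C(\mathrm{Y})^{-1}_{+,1}$ preserve the norm of $\mathfrak{m}^p$ of arbitrary finitely many elements. In either case there exist a locally compact subset $\mathrm{Y}_0\subset\mathrm{Y}$, which is closed if $\mathrm{X}$ is compact, and a surjective continuous map $\tau:\mathrm{Y}_0\to\mathrm{X}$ such that $(Tf)(y)=f(\tau(y))$ for all $y\in\mathrm{Y}_0$ and all $f$ in the domain of $T$. If moreover $T$ has norm-dense range, then $\mathrm{Y}_0=\mathrm{Y}$, $\tau$ is a homeomorphism of $\mathrm{Y}$ onto $\mathrm{X}$, and $T$ extends to an algebra $*$-isomorphism $C_0(\mathrm{X})\to C_0(\mathrm{Y})$ (namely $f\mapsto f\circ\tau$).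
   Context: $C_0(\mathrm{X})_{+,1}$ is the set of nonnegative continuous functions vanishing at infinity with sup-norm $1$; for compact $\mathrm{X}$, $C(\mathrm{X})^{-1}_{+,1}$ is the set of strictly positive continuous functions of sup-norm $1$. Power mean: for $p\neq0$, $f_1\,\mathfrak{m}^p\cdots\mathfrak{m}^p f_n=\big(\tfrac1n(f_1^p+\cdots+f_n^p)\big)^{1/p}$ pointwise; for $p=0$ it is the geometric mean $(f_1\cdots f_n)^{1/n}$. *)

theory Defs
  imports "HOL-Analysis.Analysis"
begin

text \<open>Functions on the topspace of a topological space, extended by 0 outside.\<close>

definition supn :: "'a topology \<Rightarrow> ('a \<Rightarrow> real) \<Rightarrow> real" where
  "supn X f = (if topspace X = {} then 0 else Sup ((\<lambda>x. \<bar>f x\<bar>) ` topspace X))"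

definition C0 :: "'a topology \<Rightarrow> ('a \<Rightarrow> real) set" where
  "C0 X = {f. continuous_map X euclideanreal f
              \<and> (\<forall>e>0. compactin X {x \<in> topspace X. \<bar>f x\<bar> \<ge> e})
              \<and> (\<forall>x. x \<notin> topspace X \<longrightarrow> f x = 0)}"

definition C0c :: "'a topology \<Rightarrow> ('a \<Rightarrow> complex) set" where
  "C0c X = {f. continuous_map X euclidean f
              \<and> (\<forall>e>0. compactin X {x \<in> topspace X. cmod (f x) \<ge> e})
              \<and> (\<forall>x. x \<notin> topspace X \<longrightarrow> f x = 0)}"

definition C0_pos1 :: "'a topology \<Rightarrow> ('a \<Rightarrow> real) set" where
  "C0_pos1 X = {f \<in> C0 X. (\<forall>x \<in> topspace X. f x \<ge> 0) \<and> supn X f = 1}"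

definition C_invpos1 :: "'a topology \<Rightarrow> ('a \<Rightarrow> real) set" where
  "C_invpos1 X = {f. continuous_map X euclideanreal f
                    \<and> (\<forall>x. x \<notin> topspace X \<longrightarrow> f x = 0)
                    \<and> (\<forall>x \<in> topspace X. f x > 0) \<and> supn X f = 1}"

definition Tdom :: "real \<Rightarrow> 'a topology \<Rightarrow> ('a \<Rightarrow> real) set" where
  "Tdom p X = (if p \<ge> 0 then C0_pos1 X else C_invpos1 X)"

definition pmean :: "real \<Rightarrow> ('a \<Rightarrow> real) list \<Rightarrow> 'a \<Rightarrow> real" where
  "pmean p fs x =
     (if p = 0 then (\<Prod>f\<leftarrow>fs. f x) powr (1 / real (length fs))
      else ((\<Sum>f\<leftarrow>fs. f x powr p) / real (length fs)) powr (1 / p))"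

definition star_alg_iso :: "'a topology \<Rightarrow> 'b topology \<Rightarrow> (('a \<Rightarrow> complex) \<Rightarrow> ('b \<Rightarrow> complex)) \<Rightarrow> bool" where
  "star_alg_iso X Y \<Phi> \<longleftrightarrow> bij_betw \<Phi> (C0c X) (C0c Y)
     \<and> (\<forall>f\<in>C0c X. \<forall>g\<in>C0c X. \<Phi> (\<lambda>x. f x + g x) = (\<lambda>y. \<Phi> f y + \<Phi> g y))
     \<and> (\<forall>f\<in>C0c X. \<forall>c. \<Phi> (\<lambda>x. c * f x) = (\<lambda>y. c * \<Phi> f y))
     \<and> (\<forall>f\<in>C0c X. \<forall>g\<in>C0c X. \<Phi> (\<lambda>x. f x * g x) = (\<lambda>y. \<Phi> f y * \<Phi> g y))
     \<and> (\<forall>f\<in>C0c X. \<Phi> (\<lambda>x. cnj (f x)) = (\<lambda>y. cnj (\<Phi> f y)))"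

end

theory Submission
  imports Defs
begin

text \<open>
  Fix \<open>x \<in> X\<close> and a function \<open>u\<close> of the domain with \<open>u x = 1\<close>. For every \<open>f\<close> of the
  domain, \<open>u\<close> can be cut down to a function \<open>g\<close> with \<open>g x = 1\<close> such that the power mean of
  \<open>f\<close> and \<open>g\<close> is largest at \<open>x\<close>, where it is the mean of \<open>f x\<close> and \<open>1\<close>. For finitely many
  \<open>f\<close>, the power mean of all of them together with their cutoffs is then also largest at \<open>x\<close>.
  By norm preservation the power mean of the images attains the same maximum at some \<open>y \<in> Y\<close>;
  since every pair of images is bounded at \<open>y\<close> by the value of the pair at \<open>x\<close>, all these
  bounds are equalities, which forces \<open>f x \<le> T f y\<close>. Compactness of \<open>{T u \<ge> 1}\<close> yields one
  \<open>y\<close> that works for all \<open>f\<close> at once, and the pair bound gives \<open>T f y \<le> f x\<close> as well. As the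
  domain separates points, \<open>y\<close> determines \<open>x =: \<tau> y\<close>, so \<open>T f = f \<circ> \<tau>\<close> on the set \<open>Y0\<close> of
  all such \<open>y\<close>. If the range of \<open>T\<close> is dense, it contains functions peaking near any point
  of \<open>Y\<close>, so \<open>Y0 = Y\<close> and \<open>\<tau>\<close> is injective and open.
\<close>

lemma powr_le_powr_iff:
  fixes r a b :: real
  assumes "0 < r" "0 \<le> a" "0 \<le> b"
  shows "a powr r \<le> b powr r \<longleftrightarrow> a \<le> b"
  using powr_mono2[of r a b] powr_less_mono2[of r b a] assms by (meson less_imp_le not_le)

lemma powr_le_powr_iff_neg:
  fixes r a b :: real
  assumes "r < 0" "0 < a" "0 < b"
  shows "a powr r \<le> b powr r \<longleftrightarrow> b \<le> a"
proof
  show "b \<le> a" if "a powr r \<le> b powr r"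
    using powr_less_mono2_neg[of r a b] assms that by fastforce
  show "a powr r \<le> b powr r" if "b \<le> a"
    using powr_mono2'[of r b a] assms that by simp
qed

lemma sum_list_powr_pos:
  fixes vs :: "real list"
  assumes "vs \<noteq> []" "\<forall>v\<in>set vs. 0 < v"
  shows "0 < sum_list (map (\<lambda>v. v powr p) vs)"
proof -
  obtain v where "v \<in> set vs" using assms(1) by fastforce
  then have "v powr p \<le> sum_list (map (\<lambda>v. v powr p) vs)"
    by (intro member_le_sum_list) auto
  moreover have "0 < v" using assms(2) \<open>v \<in> set vs\<close> by blast
  then have "0 < v powr p" by simp
  ultimately show ?thesis by linarith
qed

lemma prod_list_pos: "(\<And>x. x \<in> set xs \<Longrightarrow> 0 < x) \<Longrightarrow> 0 < prod_list (xs :: 'a::linordered_semidom list)"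
  by (induction xs) auto

lemma prod_list_mono_nonneg:
  fixes a b :: "'x \<Rightarrow> real"
  assumes "\<forall>f\<in>set fs. 0 \<le> a f \<and> a f \<le> b f"
  shows "prod_list (map a fs) \<le> prod_list (map b fs)"
  using assms by (induction fs) (auto intro!: mult_mono prod_list_nonneg)

lemma sum_list_mono_eq_imp_eq:
  fixes a b :: "'x \<Rightarrow> real"
  assumes "\<forall>f\<in>set fs. a f \<le> b f" "sum_list (map a fs) = sum_list (map b fs)"
  shows "\<forall>f\<in>set fs. a f = b f"
  using assms
proof (induction fs)
  case (Cons f fs)
  have "sum_list (map a fs) \<le> sum_list (map b fs)" using Cons.prems(1) by (intro sum_list_mono) auto
  then show ?case using Cons by auto
qed simp

lemma prod_list_mono_eq_imp_eq:
  fixes a b :: "'x \<Rightarrow> real"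
  assumes "\<forall>f\<in>set fs. 0 \<le> a f \<and> a f \<le> b f \<and> 0 < b f" "prod_list (map a fs) = prod_list (map b fs)"
  shows "\<forall>f\<in>set fs. a f = b f"
  using assms
proof (induction fs)
  case (Cons f fs)
  let ?A = "prod_list (map a fs)" and ?B = "prod_list (map b fs)"
  have f: "0 \<le> a f" "a f \<le> b f" "0 < b f" using Cons.prems(1) by auto
  have le: "?A \<le> ?B" using Cons.prems(1) by (intro prod_list_mono_nonneg) auto
  have B: "0 < ?B" using Cons.prems(1) by (auto intro!: prod_list_pos)
  have eq: "a f * ?A = b f * ?B" using Cons.prems(2) by simp
  have "a f = b f"
  proof (rule ccontr)
    assume "a f \<noteq> b f"
    then have "a f < b f" using f(2) by simp
    then have "a f * ?A < b f * ?B"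
      using mult_left_mono[OF le f(1)] mult_strict_right_mono[of "a f" "b f" ?B] B by linarith
    then show False using eq by simp
  qed
  then have "?A = ?B" using eq f(3) by simp
  then have "\<forall>g\<in>set fs. a g = b g" using Cons.prems(1) by (intro Cons.IH) auto
  with \<open>a f = b f\<close> show ?case by simp
qed simp

section \<open>Power means of numbers\<close>

definition power_mean :: "real \<Rightarrow> real list \<Rightarrow> real" where
  "power_mean p vs = (if p = 0 then prod_list vs powr (1 / real (length vs))
      else (sum_list (map (\<lambda>v. v powr p) vs) / real (length vs)) powr (1 / p))"

lemma pmean_eq_power_mean: "pmean p fs z = power_mean p (map (\<lambda>f. f z) fs)"
  by (simp add: pmean_def power_mean_def o_def)

lemma power_mean_nonneg: "0 \<le> power_mean p vs"
  by (simp add: power_mean_def)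

text \<open>The values taken by the functions in \<^const>\<open>Tdom\<close>.\<close>

definition value_range :: "real \<Rightarrow> real set" where
  "value_range p = (if 0 \<le> p then {0..1} else {0<..1})"

lemma value_range_nonneg: "v \<in> value_range p \<Longrightarrow> 0 \<le> v"
  and value_range_le_1: "v \<in> value_range p \<Longrightarrow> v \<le> 1"
  and value_range_pos: "v \<in> value_range p \<Longrightarrow> p < 0 \<Longrightarrow> 0 < v"
  by (auto simp: value_range_def split: if_splits)

lemma one_in_value_range [simp]: "1 \<in> value_range p"
  by (simp add: value_range_def)

lemma value_range_mult: "a \<in> value_range p \<Longrightarrow> b \<in> value_range p \<Longrightarrow> a * b \<in> value_range p"
  by (auto simp: value_range_def mult_le_one split: if_splits)

text \<open>On lists of a fixed length, \<^term>\<open>power_mean p\<close> is a strictly increasing function of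
  \<^term>\<open>power_score p\<close>, and \<^term>\<open>power_score p\<close> turns concatenation into a sum
  (a product for \<open>p = 0\<close>).\<close>

definition power_score :: "real \<Rightarrow> real list \<Rightarrow> real" where
  "power_score p vs = (if p > 0 then sum_list (map (\<lambda>v. v powr p) vs)
     else if p < 0 then - sum_list (map (\<lambda>v. v powr p) vs) else prod_list vs)"

lemma power_mean_le_iff_score:
  assumes "length vs = length ws" "vs \<noteq> []"
    and "set vs \<subseteq> value_range p" "set ws \<subseteq> value_range p"
  shows "power_mean p vs \<le> power_mean p ws \<longleftrightarrow> power_score p vs \<le> power_score p ws"
proof -
  have n: "real (length vs) > 0" using assms(2) by simp
  have "ws \<noteq> []" using assms(1,2) by auto
  consider "p > 0" | "p < 0" | "p = 0" by linarith
  then show ?thesis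
  proof cases
    case 1
    have "0 \<le> sum_list (map (\<lambda>v. v powr p) us) / real (length vs)" for us
      by (intro divide_nonneg_nonneg sum_list_nonneg) auto
    then have "power_mean p vs \<le> power_mean p ws \<longleftrightarrow>
        sum_list (map (\<lambda>v. v powr p) vs) / real (length vs)
          \<le> sum_list (map (\<lambda>v. v powr p) ws) / real (length vs)"
      using 1 assms(1) by (simp add: power_mean_def powr_le_powr_iff)
    then show ?thesis using 1 n by (simp add: power_score_def divide_le_cancel)
  next
    case 2
    have "0 < sum_list (map (\<lambda>v. v powr p) vs)" "0 < sum_list (map (\<lambda>v. v powr p) ws)"
      using assms \<open>ws \<noteq> []\<close> 2 value_range_pos by (auto intro!: sum_list_powr_pos)
    then have "power_mean p vs \<le> power_mean p ws \<longleftrightarrow>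
        sum_list (map (\<lambda>v. v powr p) ws) / real (length vs)
          \<le> sum_list (map (\<lambda>v. v powr p) vs) / real (length vs)"
      using 2 assms(1) n by (simp add: power_mean_def powr_le_powr_iff_neg)
    then show ?thesis using 2 n by (simp add: power_score_def divide_le_cancel)
  next
    case 3
    have "0 \<le> prod_list vs" "0 \<le> prod_list ws"
      using assms(3,4) value_range_nonneg by (auto intro!: prod_list_nonneg)
    then show ?thesis using 3 assms(1) n by (simp add: power_mean_def power_score_def powr_le_powr_iff)
  qed
qed

lemma power_mean_eq_iff_score:
  assumes "length vs = length ws" "vs \<noteq> []"
    and "set vs \<subseteq> value_range p" "set ws \<subseteq> value_range p"
  shows "power_mean p vs = power_mean p ws \<longleftrightarrow> power_score p vs = power_score p ws"
proof -
  have "ws \<noteq> []" using assms(1,2) by auto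
  then show ?thesis
    unfolding order_eq_iff
    using power_mean_le_iff_score[OF assms] power_mean_le_iff_score[OF assms(1)[symmetric] _ assms(4,3)]
    by simp
qed

lemma power_score_mono:
  assumes "\<forall>l\<in>set L. f l \<le> g l \<and> f l \<in> value_range p \<and> g l \<in> value_range p"
  shows "power_score p (map f L) \<le> power_score p (map g L)"
proof -
  have nonneg: "\<forall>l\<in>set L. 0 \<le> f l" and pos: "\<forall>l\<in>set L. p < 0 \<longrightarrow> 0 < f l"
    using assms value_range_nonneg value_range_pos by blast+
  consider "p > 0" | "p < 0" | "p = 0" by linarith
  then show ?thesis
  proof cases
    case 1
    have "f l powr p \<le> g l powr p" if "l \<in> set L" for l
      using 1 that assms nonneg by (intro powr_mono2) auto
    then show ?thesis using 1 by (simp add: power_score_def o_def sum_list_mono)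
  next
    case 2
    have "g l powr p \<le> f l powr p" if "l \<in> set L" for l
      using 2 that assms pos by (intro powr_mono2') auto
    then show ?thesis using 2 by (simp add: power_score_def o_def sum_list_mono)
  next
    case 3
    then show ?thesis using assms nonneg by (simp add: power_score_def prod_list_mono_nonneg)
  qed
qed

lemma power_mean_replicate:
  assumes "n > 0" "0 \<le> c"
  shows "power_mean p (replicate n c) = c"
proof (cases "p = 0")
  case True
  have "(c ^ n) powr (1 / real n) = c"
  proof (cases "c = 0")
    case False
    then have "c ^ n = c powr real n" using assms(2) by (simp add: powr_realpow)
    then show ?thesis using assms by (simp add: powr_powr)
  qed (use assms in simp)
  then show ?thesis using True by (simp add: power_mean_def prod_list_replicate)
next
  case False
  then show ?thesis using assms by (simp add: power_mean_def sum_list_replicate powr_powr)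
qed

lemma power_mean_le_Max:
  assumes "vs \<noteq> []" "set vs \<subseteq> value_range p"
  shows "power_mean p vs \<le> Max (set vs)"
proof -
  let ?m = "Max (set vs)"
  have m: "?m \<in> set vs" using assms(1) by simp
  then have "?m \<in> value_range p" "0 \<le> ?m" using assms(2) value_range_nonneg by auto
  then have "power_score p (map id vs) \<le> power_score p (map (\<lambda>_. ?m) vs)"
    using assms by (intro power_score_mono) auto
  then have "power_mean p vs \<le> power_mean p (map (\<lambda>_. ?m) vs)"
    using assms \<open>?m \<in> value_range p\<close> by (subst power_mean_le_iff_score) auto
  also have "\<dots> = ?m"
    using assms \<open>0 \<le> ?m\<close> by (simp add: map_replicate_const power_mean_replicate)
  finally show ?thesis .
qed

lemma power_mean_le_1:
  assumes "vs \<noteq> []" "set vs \<subseteq> value_range p"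
  shows "power_mean p vs \<le> 1"
proof -
  have "Max (set vs) \<in> set vs" using assms(1) by simp
  then have "Max (set vs) \<le> 1" using assms(2) value_range_le_1 by blast
  then show ?thesis using power_mean_le_Max[OF assms] by linarith
qed

lemma power_mean_pos:
  assumes "set vs \<subseteq> value_range p" "1 \<in> set vs" "p = 0 \<Longrightarrow> \<forall>v\<in>set vs. 0 < v"
  shows "0 < power_mean p vs"
proof -
  have ne: "vs \<noteq> []" using assms(2) by auto
  consider "p > 0" | "p < 0" | "p = 0" by linarith
  then show ?thesis
  proof cases
    case 1
    have "1 powr p \<le> sum_list (map (\<lambda>v. v powr p) vs)"
      using assms(2) by (intro member_le_sum_list) (auto intro!: image_eqI[where x = 1])
    moreover have "0 < real (length vs)" using ne by simp
    ultimately have "0 < sum_list (map (\<lambda>v. v powr p) vs) / real (length vs)" by simp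
    then have "0 < (sum_list (map (\<lambda>v. v powr p) vs) / real (length vs)) powr (1 / p)"
      by (metis powr_gt_zero less_irrefl)
    then show ?thesis using 1 by (simp add: power_mean_def)
  next
    case 2
    have "0 < sum_list (map (\<lambda>v. v powr p) vs)"
      using assms(1) ne 2 value_range_pos by (intro sum_list_powr_pos) auto
    then show ?thesis using 2 ne by (simp add: power_mean_def)
  next
    case 3
    then have "0 < prod_list vs" using assms(3) by (intro prod_list_pos) auto
    then show ?thesis using 3 by (simp add: power_mean_def)
  qed
qed

lemma power_score_pair:
  "power_score p [a, b] =
     (if p > 0 then a powr p + b powr p else if p < 0 then - (a powr p + b powr p) else a * b)"
  by (simp add: power_score_def)

lemma power_score_pair_le_imp_le:
  assumes "a \<in> value_range p" "b \<in> value_range p" "s \<in> value_range p"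
    and "power_score p [s, 1] \<le> power_score p [a, b]"
  shows "s \<le> a"
proof -
  consider "p > 0" | "p < 0" | "p = 0" by linarith
  then show ?thesis
  proof cases
    case 1
    have "b powr p \<le> 1" using 1 assms(2) value_range_nonneg value_range_le_1 by (intro powr_le1) auto
    then have "s powr p \<le> a powr p" using assms(4) 1 by (simp add: power_score_pair)
    then show ?thesis using powr_le_powr_iff[of p s a] 1 assms(1,3) value_range_nonneg by blast
  next
    case 2
    have "1 powr p \<le> b powr p" using 2 assms(2) value_range_pos value_range_le_1 by (intro powr_mono2') auto
    then have "a powr p \<le> s powr p" using assms(4) 2 by (simp add: power_score_pair)
    then show ?thesis using powr_le_powr_iff_neg[of p a s] 2 assms(1,3) value_range_pos by blast
  next
    case 3
    have "a * b \<le> a" using assms(1,2) value_range_nonneg value_range_le_1 by (simp add: mult_left_le)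
    then show ?thesis using assms(4) 3 by (simp add: power_score_pair)
  qed
qed

lemma power_score_nonneg: "p = 0 \<Longrightarrow> set vs \<subseteq> value_range p \<Longrightarrow> 0 \<le> power_score p vs"
  using value_range_nonneg by (auto simp: power_score_def intro!: prod_list_nonneg)

lemma power_score_concat:
  "power_score p (concat (map g fs)) =
     (if p = 0 then prod_list (map (\<lambda>f. power_score p (g f)) fs)
      else sum_list (map (\<lambda>f. power_score p (g f)) fs))"
  by (induction fs) (auto simp: power_score_def)

lemma power_score_concat_mono:
  assumes "\<forall>f\<in>set fs. power_score p (g f) \<le> power_score p (h f) \<and> set (g f) \<subseteq> value_range p"
  shows "power_score p (concat (map g fs)) \<le> power_score p (concat (map h fs))"
proof (cases "p = 0")
  case True
  have "\<forall>f\<in>set fs. 0 \<le> power_score p (g f) \<and> power_score p (g f) \<le> power_score p (h f)"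
    using assms power_score_nonneg[OF True] by blast
  then show ?thesis using True unfolding power_score_concat by (simp add: prod_list_mono_nonneg)
next
  case False
  then show ?thesis using assms unfolding power_score_concat by (simp add: sum_list_mono)
qed

lemma power_score_concat_eq_imp_eq:
  assumes "\<forall>f\<in>set fs. power_score p (g f) \<le> power_score p (h f)
             \<and> set (g f) \<subseteq> value_range p \<and> (p = 0 \<longrightarrow> 0 < power_score p (h f))"
    and "power_score p (concat (map g fs)) = power_score p (concat (map h fs))"
  shows "\<forall>f\<in>set fs. power_score p (g f) = power_score p (h f)"
proof (cases "p = 0")
  case True
  have "\<forall>f\<in>set fs. 0 \<le> power_score p (g f) \<and> power_score p (g f) \<le> power_score p (h f)
          \<and> 0 < power_score p (h f)"
    using assms(1) power_score_nonneg[OF True] True by blast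
  moreover have "prod_list (map (\<lambda>f. power_score p (g f)) fs) = prod_list (map (\<lambda>f. power_score p (h f)) fs)"
    using assms(2) True unfolding power_score_concat by simp
  ultimately show ?thesis by (rule prod_list_mono_eq_imp_eq)
next
  case False
  have "sum_list (map (\<lambda>f. power_score p (g f)) fs) = sum_list (map (\<lambda>f. power_score p (h f)) fs)"
    using assms(2) False unfolding power_score_concat by simp
  then show ?thesis using assms(1) by (intro sum_list_mono_eq_imp_eq) auto
qed

lemma continuous_map_compose_continuous_on:
  assumes "continuous_map X euclideanreal g" "g ` topspace X \<subseteq> S" "continuous_on S h"
  shows "continuous_map X euclideanreal (\<lambda>x. h (g x))"
proof -
  have "continuous_map X (top_of_set S) g"
    using assms(1,2) by (auto simp: continuous_map_in_subtopology)
  then show ?thesis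
    using continuous_map_compose[of X "top_of_set S" g euclideanreal h] assms(3) by (simp add: o_def)
qed

lemma continuous_map_powr_nonneg:
  assumes "continuous_map X euclideanreal g" "\<forall>x\<in>topspace X. 0 \<le> g x" "0 < r"
  shows "continuous_map X euclideanreal (\<lambda>x. g x powr r)"
proof -
  have "continuous_on {0..} (\<lambda>t::real. t powr r)"
    using assms(3) by (intro continuous_on_powr') (auto intro: continuous_intros)
  moreover have "g ` topspace X \<subseteq> {0..}" using assms(2) by auto
  ultimately show ?thesis
    using continuous_map_compose_continuous_on[OF assms(1), of "{0..}" "\<lambda>t. t powr r"] by simp
qed

lemma continuous_map_powr_pos:
  assumes "continuous_map X euclideanreal g" "\<forall>x\<in>topspace X. 0 < g x"
  shows "continuous_map X euclideanreal (\<lambda>x. g x powr r)"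
proof -
  have "continuous_on {0<..} (\<lambda>t::real. t powr r)"
    by (intro continuous_on_powr) (auto intro: continuous_intros)
  moreover have "g ` topspace X \<subseteq> {0<..}" using assms(2) by auto
  ultimately show ?thesis
    using continuous_map_compose_continuous_on[OF assms(1), of "{0<..}" "\<lambda>t. t powr r"] by simp
qed

lemma continuous_map_sum_list:
  assumes "\<forall>f\<in>set L. continuous_map X euclideanreal (h f)"
  shows "continuous_map X euclideanreal (\<lambda>x. sum_list (map (\<lambda>f. h f x) L) :: real)"
  using assms by (induction L) (auto intro: continuous_map_add)

lemma continuous_map_prod_list:
  assumes "\<forall>f\<in>set L. continuous_map X euclideanreal (h f)"
  shows "continuous_map X euclideanreal (\<lambda>x. prod_list (map (\<lambda>f. h f x) L) :: real)"
  using assms by (induction L) (auto intro: continuous_map_real_mult)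

lemma continuous_map_pmean:
  assumes "fs \<noteq> []"
    and "\<forall>f\<in>set fs. continuous_map X euclideanreal f \<and> (\<forall>x\<in>topspace X. f x \<in> value_range p)"
  shows "continuous_map X euclideanreal (pmean p fs)"
proof -
  have nonneg: "\<forall>f\<in>set fs. \<forall>x\<in>topspace X. 0 \<le> f x"
    using assms(2) value_range_nonneg by blast
  have n: "0 < real (length fs)" using assms(1) by simp
  consider "p > 0" | "p < 0" | "p = 0" by linarith
  then show ?thesis
  proof cases
    case 1
    have "continuous_map X euclideanreal (\<lambda>x. sum_list (map (\<lambda>f. f x powr p) fs))"
      using assms(2) nonneg 1 by (intro continuous_map_sum_list) (auto intro!: continuous_map_powr_nonneg)
    then have "continuous_map X euclideanreal
        (\<lambda>x. (sum_list (map (\<lambda>f. f x powr p) fs) / real (length fs)) powr (1 / p))"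
      using 1 n by (intro continuous_map_powr_nonneg continuous_map_real_divide)
        (auto intro!: divide_nonneg_nonneg sum_list_nonneg)
    then show ?thesis using 1 by (simp add: pmean_def[abs_def])
  next
    case 2
    have "continuous_map X euclideanreal (\<lambda>x. sum_list (map (\<lambda>f. f x powr p) fs))"
      using assms(2) 2 value_range_pos
      by (intro continuous_map_sum_list) (auto intro!: continuous_map_powr_pos)
    moreover have "0 < sum_list (map (\<lambda>f. f x powr p) fs)" if "x \<in> topspace X" for x
    proof -
      have "\<forall>f\<in>set fs. 0 < f x" using assms(2) that 2 value_range_pos by blast
      then show ?thesis using sum_list_powr_pos[of "map (\<lambda>f. f x) fs" p] assms(1) by (simp add: o_def)
    qed
    ultimately have "continuous_map X euclideanreal
        (\<lambda>x. (sum_list (map (\<lambda>f. f x powr p) fs) / real (length fs)) powr (1 / p))"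
      using n by (intro continuous_map_powr_pos continuous_map_real_divide) auto
    then show ?thesis using 2 by (simp add: pmean_def[abs_def])
  next
    case 3
    have "continuous_map X euclideanreal (\<lambda>x. prod_list (map (\<lambda>f. f x) fs))"
      using assms(2) by (intro continuous_map_prod_list) auto
    moreover have "0 \<le> prod_list (map (\<lambda>f. f x) fs)" if "x \<in> topspace X" for x
      using nonneg that by (auto intro!: prod_list_nonneg)
    ultimately have "continuous_map X euclideanreal
        (\<lambda>x. prod_list (map (\<lambda>f. f x) fs) powr (1 / real (length fs)))"
      using n by (intro continuous_map_powr_nonneg) auto
    then show ?thesis using 3 by (simp add: pmean_def[abs_def])
  qed
qed

lemma closedin_superlevel:
  "continuous_map X euclideanreal h \<Longrightarrow> closedin X {x \<in> topspace X. e \<le> h x}"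
  using closedin_continuous_map_preimage[of X euclideanreal h "{e..}"] by simp

lemma openin_strict_superlevel:
  "continuous_map X euclideanreal h \<Longrightarrow> openin X {x \<in> topspace X. e < h x}"
  using openin_continuous_map_preimage[of X euclideanreal h "{e<..}"] by simp

lemma openin_strict_sublevel:
  "continuous_map X euclideanreal h \<Longrightarrow> openin X {x \<in> topspace X. h x < e}"
  using openin_continuous_map_preimage[of X euclideanreal h "{..<e}"] by simp

lemma supn_eq_Sup:
  assumes "\<forall>x\<in>topspace X. 0 \<le> h x" "topspace X \<noteq> {}"
  shows "supn X h = Sup (h ` topspace X)"
proof -
  have "(\<lambda>x. \<bar>h x\<bar>) ` topspace X = h ` topspace X" using assms(1) by (auto intro!: image_cong)
  then show ?thesis using assms(2) by (simp add: supn_def)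
qed

lemma abs_le_supn:
  assumes "\<forall>x\<in>topspace X. \<bar>h x\<bar> \<le> B" "x \<in> topspace X"
  shows "\<bar>h x\<bar> \<le> supn X h"
proof -
  have "bdd_above ((\<lambda>x. \<bar>h x\<bar>) ` topspace X)" using assms(1) by (auto intro!: bdd_aboveI2)
  then show ?thesis using assms(2) by (auto simp: supn_def intro!: cSup_upper)
qed

lemma supn_le:
  assumes "\<forall>x\<in>topspace X. \<bar>h x\<bar> \<le> B" "topspace X \<noteq> {}"
  shows "supn X h \<le> B"
  using assms by (auto simp: supn_def intro!: cSup_least)

lemma supn_eq_max:
  assumes "\<forall>x\<in>topspace X. 0 \<le> h x \<and> h x \<le> h x0" "x0 \<in> topspace X"
  shows "supn X h = h x0"
proof -
  have "supn X h = Sup (h ` topspace X)" using assms by (intro supn_eq_Sup) auto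
  also have "\<dots> = h x0" using assms by (intro cSup_eq_maximum) auto
  finally show ?thesis .
qed

lemma supn_attained:
  assumes cont: "continuous_map X euclideanreal h" and nonneg: "\<forall>x\<in>topspace X. 0 \<le> h x"
    and c: "supn X h = c" "c > 0" and K: "compactin X {x\<in>topspace X. c/2 \<le> h x}"
  shows "(\<forall>x\<in>topspace X. h x \<le> c) \<and> (\<exists>x\<in>topspace X. h x = c)"
proof -
  let ?K = "{x\<in>topspace X. c/2 \<le> h x}"
  have ne: "topspace X \<noteq> {}" using c by (auto simp: supn_def)
  have S: "Sup (h ` topspace X) = c" using c supn_eq_Sup[OF nonneg ne] by simp
  have "compact (h ` ?K)" using image_compactin[OF K cont] by simp
  then obtain B where B: "\<forall>v\<in>h ` ?K. v \<le> B"
    using compact_imp_bounded bounded_imp_bdd_above by (meson bdd_above_def)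
  have "h x \<le> max B (c/2)" if "x \<in> topspace X" for x
    using B that by (cases "c/2 \<le> h x") auto
  then have "bdd_above (h ` topspace X)" by (auto intro!: bdd_aboveI2)
  moreover have "c/2 < Sup (h ` topspace X)" using S c by simp
  ultimately obtain x1 where "x1 \<in> topspace X" "c/2 < h x1"
    using less_cSup_iff[of "h ` topspace X" "c/2"] ne by auto
  then have "h ` ?K \<noteq> {}" by auto
  then obtain x0 where x0: "x0 \<in> ?K" "\<forall>v\<in>h ` ?K. v \<le> h x0"
    using compact_attains_sup[OF \<open>compact (h ` ?K)\<close>] by blast
  have max: "h x \<le> h x0" if "x \<in> topspace X" for x
  proof (cases "c/2 \<le> h x")
    case True then show ?thesis using x0(2) that by auto
  next
    case False then show ?thesis using x0(1) by auto
  qed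
  then have "Sup (h ` topspace X) = h x0" using x0(1) by (intro cSup_eq_maximum) auto
  then show ?thesis using S max x0(1) by auto
qed

lemma locally_compact_Hausdorff_bump:
  assumes "locally_compact_space X" "Hausdorff_space X" "openin X W" "x \<in> W"
  obtains u K where "continuous_map X euclideanreal u" "u x = 1" "\<And>z. 0 \<le> u z \<and> u z \<le> 1"
    "\<And>z. z \<notin> W \<Longrightarrow> u z = 0" "compactin X K" "\<And>z. z \<notin> K \<Longrightarrow> u z = 0"
proof -
  have "regular_space X" using assms(1,2) locally_compact_Hausdorff_imp_regular_space by blast
  then have "neighbourhood_base_of (\<lambda>C. compactin X C \<and> closedin X C) X"
    using assms(1) locally_compact_regular_space_neighbourhood_base by blast
  then obtain U M where UM: "openin X U" "compactin X M" "x \<in> U" "U \<subseteq> M" "M \<subseteq> W"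
    unfolding neighbourhood_base_of using assms(3,4) by metis
  have cr: "completely_regular_space X"
    using assms(1,2) locally_compact_regular_imp_completely_regular_space by blast
  have x: "x \<in> topspace X" using assms(3,4) openin_subset by blast
  have "closedin X (topspace X - U)" using UM(1) by blast
  moreover have "x \<in> topspace X - (topspace X - U)" using UM(3) x by blast
  ultimately obtain f :: "'a \<Rightarrow> real" where
    f: "continuous_map X (top_of_set {0..1}) f" "f x = 0" "f ` (topspace X - U) \<subseteq> {1}"
    using cr unfolding completely_regular_space_def by blast
  have fc: "continuous_map X euclideanreal f" and fr: "\<forall>z\<in>topspace X. 0 \<le> f z \<and> f z \<le> 1"
    using f(1) by (auto simp: continuous_map_in_subtopology image_subset_iff)
  define u where "u z = (if z \<in> topspace X then 1 - f z else 0)" for z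
  have uc: "continuous_map X euclideanreal u"
    by (rule continuous_map_eq[of _ _ "\<lambda>z. 1 - f z"]) (auto intro: continuous_intros fc simp: u_def)
  have "u z = 0" if "z \<notin> U" for z using that f(3) by (auto simp: u_def)
  moreover have "0 \<le> u z \<and> u z \<le> 1" for z using fr by (auto simp: u_def)
  moreover have "u x = 1" using x f(2) by (simp add: u_def)
  ultimately show ?thesis using that[OF uc, of M] UM by blast
qed

definition domain_space :: "real \<Rightarrow> 'a topology \<Rightarrow> bool" where
  "domain_space p Z \<longleftrightarrow>
     Hausdorff_space Z \<and> (if p \<ge> 0 then locally_compact_space Z else compact_space Z)"

lemma domain_space_locally_compact: "domain_space p Z \<Longrightarrow> locally_compact_space Z"
  by (auto simp: domain_space_def compact_imp_locally_compact_space split: if_splits)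

lemma domain_space_Hausdorff: "domain_space p Z \<Longrightarrow> Hausdorff_space Z"
  by (simp add: domain_space_def)

lemma Tdom_continuous: "f \<in> Tdom p Z \<Longrightarrow> continuous_map Z euclideanreal f"
  and Tdom_outside: "f \<in> Tdom p Z \<Longrightarrow> z \<notin> topspace Z \<Longrightarrow> f z = 0"
  and Tdom_supn: "f \<in> Tdom p Z \<Longrightarrow> supn Z f = 1"
  and Tdom_nonneg: "f \<in> Tdom p Z \<Longrightarrow> z \<in> topspace Z \<Longrightarrow> 0 \<le> f z"
  and Tdom_pos: "f \<in> Tdom p Z \<Longrightarrow> p < 0 \<Longrightarrow> z \<in> topspace Z \<Longrightarrow> 0 < f z"
  by (auto simp: Tdom_def C0_pos1_def C0_def C_invpos1_def less_imp_le split: if_splits)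

lemma Tdom_superlevel_compact:
  assumes "domain_space p Z" "f \<in> Tdom p Z" "e > 0"
  shows "compactin Z {z \<in> topspace Z. e \<le> f z}"
proof (cases "p \<ge> 0")
  case True
  have "{z \<in> topspace Z. e \<le> f z} = {z \<in> topspace Z. e \<le> \<bar>f z\<bar>}"
    using Tdom_nonneg[OF assms(2)] by force
  then show ?thesis using True assms by (auto simp: Tdom_def C0_pos1_def C0_def)
next
  case False
  then have "compact_space Z" using assms(1) by (simp add: domain_space_def)
  then show ?thesis
    using closedin_superlevel[OF Tdom_continuous[OF assms(2)]] closedin_compact_space by blast
qed

lemma Tdom_value_range:
  assumes "domain_space p Z" "f \<in> Tdom p Z"
  shows "\<forall>z\<in>topspace Z. f z \<in> value_range p" "\<exists>z\<in>topspace Z. f z = 1"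
proof -
  have "(\<forall>z\<in>topspace Z. f z \<le> 1) \<and> (\<exists>z\<in>topspace Z. f z = 1)"
    using supn_attained[OF Tdom_continuous[OF assms(2)] _ Tdom_supn[OF assms(2)] _
        Tdom_superlevel_compact[OF assms]] Tdom_nonneg[OF assms(2)] by auto
  then show "\<forall>z\<in>topspace Z. f z \<in> value_range p" "\<exists>z\<in>topspace Z. f z = 1"
    using Tdom_nonneg[OF assms(2)] Tdom_pos[OF assms(2)] by (auto simp: value_range_def)
qed

lemma Tdom_le_1: "domain_space p Z \<Longrightarrow> f \<in> Tdom p Z \<Longrightarrow> f z \<le> 1"
  by (metis Tdom_value_range(1) Tdom_outside value_range_le_1 zero_le_one)

lemma Tdom_intro:
  assumes "continuous_map Z euclideanreal h" "\<And>z. z \<notin> topspace Z \<Longrightarrow> h z = 0"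
    and "\<And>z. z \<in> topspace Z \<Longrightarrow> h z \<in> value_range p" "x \<in> topspace Z" "h x = 1"
    and "p \<ge> 0 \<Longrightarrow> \<forall>e>0. compactin Z {z \<in> topspace Z. e \<le> h z}"
  shows "h \<in> Tdom p Z"
proof -
  have nonneg: "\<forall>z\<in>topspace Z. 0 \<le> h z" using assms(3) value_range_nonneg by blast
  have "supn Z h = Sup (h ` topspace Z)" using nonneg assms(4) by (intro supn_eq_Sup) auto
  also have "\<dots> = 1" using assms(3-5) value_range_le_1 by (intro cSup_eq_maximum) auto
  finally have "supn Z h = 1" .
  moreover have "{z \<in> topspace Z. e \<le> \<bar>h z\<bar>} = {z \<in> topspace Z. e \<le> h z}" for e
    using nonneg by force
  ultimately show ?thesis
    using assms nonneg by (auto simp: Tdom_def C0_pos1_def C0_def C_invpos1_def value_range_def)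
qed

text \<open>For \<open>p < 0\<close> the functions of the domain are strictly positive, so the bump is lifted
  to the level \<open>\<eta>\<close> instead of vanishing outside \<open>W\<close>.\<close>

lemma Tdom_bump:
  assumes "domain_space p Z" "openin Z W" "x \<in> W" "0 < \<eta>" "\<eta> < 1"
  obtains u where "u \<in> Tdom p Z" "u x = 1" "\<And>z. z \<in> topspace Z \<Longrightarrow> z \<notin> W \<Longrightarrow> u z \<le> \<eta>"
    "p \<ge> 0 \<Longrightarrow> \<forall>z. z \<notin> W \<longrightarrow> u z = 0"
proof -
  obtain b K where b: "continuous_map Z euclideanreal b" "b x = 1" "\<And>z. 0 \<le> b z \<and> b z \<le> 1"
    "\<And>z. z \<notin> W \<Longrightarrow> b z = 0" "compactin Z K" "\<And>z. z \<notin> K \<Longrightarrow> b z = 0"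
    using locally_compact_Hausdorff_bump[OF domain_space_locally_compact[OF assms(1)]
        domain_space_Hausdorff[OF assms(1)] assms(2,3)] by metis
  have x: "x \<in> topspace Z" and W: "W \<subseteq> topspace Z" using assms(2,3) openin_subset by auto
  show ?thesis
  proof (cases "p \<ge> 0")
    case True
    have "{z \<in> topspace Z. e \<le> b z} \<subseteq> K" if "e > 0" for e using b(6) that by force
    then have "compactin Z {z \<in> topspace Z. e \<le> b z}" if "e > 0" for e
      using closed_compactin[OF b(5)] closedin_superlevel[OF b(1)] that by blast
    moreover have "b z = 0" if "z \<notin> topspace Z" for z using b(4) that W by blast
    ultimately have "b \<in> Tdom p Z"
      using b True x by (intro Tdom_intro[OF b(1)]) (auto simp: value_range_def)
    then show ?thesis using that[of b] b True assms(4) by auto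
  next
    case False
    define u where "u z = (if z \<in> topspace Z then \<eta> + (1 - \<eta>) * b z else 0)" for z
    have "continuous_map Z euclideanreal u"
      by (rule continuous_map_eq[of _ _ "\<lambda>z. \<eta> + (1 - \<eta>) * b z"])
        (auto intro!: continuous_map_add continuous_map_real_mult b(1) simp: u_def)
    moreover have "u z \<in> value_range p" if "z \<in> topspace Z" for z
    proof -
      have "0 \<le> (1 - \<eta>) * b z" "(1 - \<eta>) * b z \<le> 1 - \<eta>"
        using b(3)[of z] assms(5) by (auto intro: mult_left_le)
      then show ?thesis using that False assms(4) by (simp add: u_def value_range_def)
    qed
    ultimately have "u \<in> Tdom p Z"
      using False x b(2) by (intro Tdom_intro) (auto simp: u_def)
    moreover have "u z \<le> \<eta>" if "z \<in> topspace Z" "z \<notin> W" for z using that b(4) by (simp add: u_def)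
    ultimately show ?thesis using that[of u] False x b(2) by (auto simp: u_def)
  qed
qed

lemma Tdom_mult:
  assumes "domain_space p Z" "u \<in> Tdom p Z" "u x = 1" "x \<in> topspace Z"
    and "continuous_map Z euclideanreal H" "\<And>z. z \<in> topspace Z \<Longrightarrow> H z \<in> value_range p" "H x = 1"
  shows "(\<lambda>z. u z * H z) \<in> Tdom p Z"
proof (rule Tdom_intro)
  show cont: "continuous_map Z euclideanreal (\<lambda>z. u z * H z)"
    using Tdom_continuous[OF assms(2)] assms(5) by (intro continuous_map_real_mult)
  have u: "u z \<in> value_range p" if "z \<in> topspace Z" for z
    using Tdom_value_range(1)[OF assms(1,2)] that by blast
  then show "u z * H z \<in> value_range p" if "z \<in> topspace Z" for z
    using value_range_mult assms(6) that by blast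
  show "u z * H z = 0" if "z \<notin> topspace Z" for z using Tdom_outside[OF assms(2) that] by simp
  show "x \<in> topspace Z" "u x * H x = 1" using assms(3,4,7) by auto
  show "\<forall>e>0. compactin Z {z \<in> topspace Z. e \<le> u z * H z}"
  proof (intro allI impI)
    fix e :: real assume "e > 0"
    have "u z * H z \<le> u z" if "z \<in> topspace Z" for z
      using u[OF that] assms(6)[OF that] value_range_nonneg value_range_le_1 by (simp add: mult_left_le)
    then have "{z \<in> topspace Z. e \<le> u z * H z} \<subseteq> {z \<in> topspace Z. e \<le> u z}" by force
    then show "compactin Z {z \<in> topspace Z. e \<le> u z * H z}"
      using closed_compactin[OF Tdom_superlevel_compact[OF assms(1,2) \<open>e > 0\<close>]]
        closedin_superlevel[OF cont] by blast
  qed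
qed

section \<open>Peaking functions\<close>

text \<open>\<^term>\<open>peak_factor p s t\<close> is the largest \<open>h \<le> 1\<close> with
  \<^term>\<open>power_score p [t, h] \<le> power_score p [s, 1]\<close>.\<close>

definition peak_factor :: "real \<Rightarrow> real \<Rightarrow> real \<Rightarrow> real" where
  "peak_factor p s t =
     (if p > 0 then (min 1 (1 + s powr p - t powr p)) powr (1 / p)
      else if p < 0 then (max 1 (1 + s powr p - t powr p)) powr (1 / p)
      else min 1 (s / max t s))"

lemma peak_factor_self: "(p = 0 \<Longrightarrow> 0 < s) \<Longrightarrow> peak_factor p s s = 1"
  by (cases "p = 0") (auto simp: peak_factor_def)

lemma peak_factor_base_nonneg:
  assumes "p > 0" "t \<in> value_range p"
  shows "0 \<le> min 1 (1 + s powr p - t powr p)"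
proof -
  have "t powr p \<le> 1"
    using assms value_range_nonneg[OF assms(2)] value_range_le_1[OF assms(2)] by (intro powr_le1) auto
  moreover have "0 \<le> s powr p" by simp
  ultimately have "0 \<le> 1 + s powr p - t powr p" by linarith
  then show ?thesis by simp
qed

lemma peak_factor_value_range:
  assumes "t \<in> value_range p" "0 \<le> s"
  shows "peak_factor p s t \<in> value_range p"
proof -
  consider "p > 0" | "p < 0" | "p = 0" by linarith
  then show ?thesis
  proof cases
    case 1
    then show ?thesis using peak_factor_base_nonneg[OF 1 assms(1)]
      by (auto simp: peak_factor_def value_range_def intro!: powr_le1)
  next
    case 2
    then have "(max 1 (1 + s powr p - t powr p)) powr (1 / p) \<le> 1 powr (1 / p)"
      by (intro powr_mono2') auto
    then show ?thesis using 2 by (simp add: peak_factor_def value_range_def)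
  qed (use assms in \<open>auto simp: peak_factor_def value_range_def\<close>)
qed

lemma power_score_peak_factor:
  assumes "t \<in> value_range p" "u \<in> value_range p" "0 \<le> s" "p = 0 \<Longrightarrow> 0 < s"
  shows "power_score p [t, u * peak_factor p s t] \<le> power_score p [s, 1]"
proof -
  let ?h = "peak_factor p s t"
  have h: "?h \<in> value_range p" using peak_factor_value_range assms(1,3) .
  have u: "0 \<le> u" "u \<le> 1" using assms(2) value_range_nonneg value_range_le_1 by auto
  consider "p > 0" | "p < 0" | "p = 0" by linarith
  then show ?thesis
  proof cases
    case 1
    let ?m = "min 1 (1 + s powr p - t powr p)"
    have m: "0 \<le> ?m" using peak_factor_base_nonneg[OF 1 assms(1)] .
    have "(u * ?h) powr p = u powr p * ?m"
      using u h m 1 value_range_nonneg by (simp add: powr_mult peak_factor_def powr_powr)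
    also have "\<dots> \<le> ?m" using m u 1 by (intro mult_left_le_one_le powr_le1) auto
    finally show ?thesis using 1 by (simp add: power_score_pair)
  next
    case 2
    let ?m = "max 1 (1 + s powr p - t powr p)"
    have "(u * ?h) powr p = u powr p * ?m"
      using u h 2 value_range_nonneg by (simp add: powr_mult peak_factor_def powr_powr)
    moreover have "1 \<le> u powr p"
      using assms(2) 2 value_range_pos u powr_mono2'[of p u 1] by auto
    ultimately have "?m \<le> (u * ?h) powr p" by (simp add: mult_le_cancel_right1)
    then show ?thesis using 2 by (simp add: power_score_pair)
  next
    case 3
    have t: "0 \<le> t" using assms(1) value_range_nonneg by blast
    have "0 \<le> min 1 (s / max t s)" using t assms(3) by simp
    then have "u * ?h \<le> s / max t s"
      using u 3 mult_left_le_one_le[of "min 1 (s / max t s)" u] by (simp add: peak_factor_def)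
    then have "t * (u * ?h) \<le> t * (s / max t s)" using t by (rule mult_left_mono)
    also have "\<dots> \<le> s" using t assms(4) 3 by (simp add: divide_le_eq mult.commute mult_left_mono)
    finally show ?thesis using 3 by (simp add: power_score_pair)
  qed
qed

lemma continuous_on_peak_factor:
  assumes "0 \<le> s" "p = 0 \<Longrightarrow> 0 < s"
  shows "continuous_on (value_range p) (peak_factor p s)"
proof -
  consider "p > 0" | "p < 0" | "p = 0" by linarith
  then show ?thesis
  proof cases
    case 1
    have "continuous_on {0..1} (\<lambda>t. t powr p)"
      using 1 by (intro continuous_on_powr') (auto intro: continuous_intros)
    then have "continuous_on {0..1} (\<lambda>t. (min 1 (1 + s powr p - t powr p)) powr (1 / p))"
      using 1 peak_factor_base_nonneg[OF 1]
      by (intro continuous_on_powr' continuous_intros) (auto simp: value_range_def)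
    then show ?thesis using 1 by (simp add: peak_factor_def[abs_def] value_range_def)
  next
    case 2
    have "continuous_on {0<..1} (\<lambda>t. t powr p)"
      by (intro continuous_on_powr) (auto intro: continuous_intros)
    then have "continuous_on {0<..1} (\<lambda>t. (max 1 (1 + s powr p - t powr p)) powr (1 / p))"
      by (intro continuous_on_powr continuous_intros) auto
    then show ?thesis using 2 by (simp add: peak_factor_def[abs_def] value_range_def)
  next
    case 3
    have "continuous_on {0..1} (\<lambda>t. min 1 (s / max t s))"
      using assms(2) 3 by (intro continuous_intros) auto
    then show ?thesis using 3 by (simp add: peak_factor_def[abs_def] value_range_def)
  qed
qed

definition peak_cutoff :: "real \<Rightarrow> ('a \<Rightarrow> real) \<Rightarrow> 'a \<Rightarrow> ('a \<Rightarrow> real) \<Rightarrow> 'a \<Rightarrow> real" where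
  "peak_cutoff p u x f z = u z * peak_factor p (f x) (f z)"

lemma
  assumes "domain_space p Z" "u \<in> Tdom p Z" "u x = 1" "x \<in> topspace Z"
    and "f \<in> Tdom p Z" "p = 0 \<Longrightarrow> 0 < f x"
  shows Tdom_peak_cutoff: "peak_cutoff p u x f \<in> Tdom p Z"
    and peak_cutoff_at: "peak_cutoff p u x f x = 1"
    and power_score_peak_cutoff:
      "\<forall>z\<in>topspace Z. power_score p [f z, peak_cutoff p u x f z] \<le> power_score p [f x, 1]"
proof -
  have f: "\<forall>z\<in>topspace Z. f z \<in> value_range p" using Tdom_value_range(1)[OF assms(1,5)] .
  have fx: "0 \<le> f x" using Tdom_nonneg[OF assms(5,4)] .
  show at: "peak_cutoff p u x f x = 1"
    using assms(3,6) by (simp add: peak_cutoff_def peak_factor_self)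
  have "continuous_map Z euclideanreal (\<lambda>z. peak_factor p (f x) (f z))"
    using continuous_map_compose_continuous_on[OF Tdom_continuous[OF assms(5)] _
        continuous_on_peak_factor[OF fx assms(6)]] f by auto
  then show "peak_cutoff p u x f \<in> Tdom p Z"
    unfolding peak_cutoff_def[abs_def]
    using Tdom_mult[OF assms(1-4)] f fx peak_factor_value_range assms(3,6) at
    by (simp add: peak_cutoff_def peak_factor_self)
  show "\<forall>z\<in>topspace Z. power_score p [f z, peak_cutoff p u x f z] \<le> power_score p [f x, 1]"
    using f fx assms(6) Tdom_value_range(1)[OF assms(1,2)]
    by (simp add: peak_cutoff_def power_score_peak_factor)
qed

lemma Tdom_values:
  "domain_space p Z \<Longrightarrow> set fs \<subseteq> Tdom p Z \<Longrightarrow> z \<in> topspace Z \<Longrightarrow>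
     set (map (\<lambda>f. f z) fs) \<subseteq> value_range p"
  using Tdom_value_range(1) by fastforce

lemma supn_pmean_eq_at:
  assumes "domain_space p Z" "fs \<noteq> []" "set fs \<subseteq> Tdom p Z" "x \<in> topspace Z"
    and "\<forall>z\<in>topspace Z. power_score p (map (\<lambda>f. f z) fs) \<le> power_score p (map (\<lambda>f. f x) fs)"
  shows "supn Z (pmean p fs) = pmean p fs x"
proof (rule supn_eq_max[OF _ assms(4)], intro ballI conjI)
  fix z assume z: "z \<in> topspace Z"
  show "0 \<le> pmean p fs z" by (simp add: pmean_eq_power_mean power_mean_nonneg)
  show "pmean p fs z \<le> pmean p fs x"
    unfolding pmean_eq_power_mean
    using assms z Tdom_values[OF assms(1,3)] by (subst power_mean_le_iff_score) auto
qed

lemma pmean_le_supn: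
  assumes "domain_space p Z" "fs \<noteq> []" "set fs \<subseteq> Tdom p Z" "z \<in> topspace Z"
  shows "pmean p fs z \<le> supn Z (pmean p fs)"
proof -
  have "\<bar>pmean p fs z\<bar> \<le> 1" if "z \<in> topspace Z" for z
  proof -
    have "power_mean p (map (\<lambda>f. f z) fs) \<le> 1"
      using assms(2) Tdom_values[OF assms(1,3) that] by (intro power_mean_le_1) auto
    then show ?thesis by (simp add: pmean_eq_power_mean power_mean_nonneg)
  qed
  then show ?thesis using abs_le_supn[of Z "pmean p fs" 1 z] assms(4)
    by (simp add: pmean_eq_power_mean power_mean_nonneg)
qed

lemma pmean_attains_supn:
  assumes Z: "domain_space p Z" and fs: "fs \<noteq> []" "set fs \<subseteq> Tdom p Z"
    and c: "supn Z (pmean p fs) = c" "c > 0"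
  shows "\<exists>z\<in>topspace Z. pmean p fs z = c"
proof -
  let ?h = "pmean p fs"
  have "\<forall>f\<in>set fs. continuous_map Z euclideanreal f \<and> (\<forall>z\<in>topspace Z. f z \<in> value_range p)"
    using fs(2) Tdom_continuous Tdom_value_range(1)[OF Z] by blast
  then have cont: "continuous_map Z euclideanreal ?h" by (rule continuous_map_pmean[OF fs(1)])
  have "compactin Z {z \<in> topspace Z. c/2 \<le> ?h z}"
  proof (cases "p \<ge> 0")
    case False
    then have "compact_space Z" using Z by (simp add: domain_space_def)
    then show ?thesis using closedin_superlevel[OF cont] closedin_compact_space by blast
  next
    case True
    have "{z \<in> topspace Z. c/2 \<le> ?h z} \<subseteq> (\<Union>f\<in>set fs. {z \<in> topspace Z. c/2 \<le> f z})"
    proof clarify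
      fix z assume z: "z \<in> topspace Z" "c/2 \<le> ?h z"
      let ?vs = "map (\<lambda>f. f z) fs"
      have "?h z \<le> Max (set ?vs)"
        unfolding pmean_eq_power_mean using fs(1) Tdom_values[OF Z fs(2) z(1)]
        by (intro power_mean_le_Max) auto
      moreover have "Max (set ?vs) \<in> set ?vs" using fs(1) by (intro Max_in) auto
      then obtain f where "f \<in> set fs" "Max (set ?vs) = f z" by auto
      ultimately have "c/2 \<le> f z" using z(2) by linarith
      then show "z \<in> (\<Union>f\<in>set fs. {z \<in> topspace Z. c/2 \<le> f z})" using z(1) \<open>f \<in> set fs\<close> by blast
    qed
    moreover have "compactin Z {z \<in> topspace Z. c/2 \<le> f z}" if "f \<in> set fs" for f
      using Tdom_superlevel_compact[OF Z, of f "c/2"] fs(2) c(2) that by auto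
    then have "compactin Z (\<Union>f\<in>set fs. {z \<in> topspace Z. c/2 \<le> f z})"
      by (intro compactin_Union) auto
    ultimately show ?thesis using closed_compactin closedin_superlevel[OF cont] by blast
  qed
  moreover have "\<forall>z\<in>topspace Z. 0 \<le> ?h z" by (simp add: pmean_eq_power_mean power_mean_nonneg)
  ultimately show ?thesis using supn_attained[OF cont _ c] by blast
qed

lemma Tdom_separates_points:
  assumes "domain_space p X" "x \<in> topspace X" "x' \<in> topspace X" "x \<noteq> x'"
  shows "\<exists>f\<in>Tdom p X. f x \<noteq> f x'"
proof -
  have "t1_space X" using Hausdorff_imp_t1_space[OF domain_space_Hausdorff[OF assms(1)]] .
  then have "closedin X {x'}" using assms(3) by (rule closedin_t1_singleton)
  then have W: "openin X (topspace X - {x'})" by (simp add: closedin_def)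
  obtain u where u: "u \<in> Tdom p X" "u x = 1"
      "\<And>z. z \<in> topspace X \<Longrightarrow> z \<notin> topspace X - {x'} \<Longrightarrow> u z \<le> 1/2"
  proof (rule Tdom_bump[OF assms(1) W, of x "1/2"])
    fix u assume "u \<in> Tdom p X" "u x = 1"
      "\<And>z. z \<in> topspace X \<Longrightarrow> z \<notin> topspace X - {x'} \<Longrightarrow> u z \<le> 1/2"
    then show thesis by (rule that)
  qed (use assms(2,4) in auto)
  have "u x' \<le> 1/2" using u(3)[of x'] assms(3) by simp
  then show ?thesis using u(1,2) by (intro bexI[of _ u]) auto
qed

definition peak_list :: "real \<Rightarrow> ('a \<Rightarrow> real) \<Rightarrow> 'a \<Rightarrow> ('a \<Rightarrow> real) list \<Rightarrow> ('a \<Rightarrow> real) list" where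
  "peak_list p u x fs = concat (map (\<lambda>f. [f, peak_cutoff p u x f]) fs)"

lemma map_peak_list: "map h (peak_list p u x fs) = concat (map (\<lambda>f. [h f, h (peak_cutoff p u x f)]) fs)"
  by (induction fs) (auto simp: peak_list_def)

context
  fixes p :: real and Z :: "'a topology" and u :: "'a \<Rightarrow> real" and x :: 'a and fs
  assumes Z: "domain_space p Z" and u: "u \<in> Tdom p Z" "u x = 1" and x: "x \<in> topspace Z"
    and fs: "fs \<noteq> []" "set fs \<subseteq> Tdom p Z" "p = 0 \<Longrightarrow> \<forall>f\<in>set fs. 0 < f x"
begin

lemma peak_cutoff_in_list:
  assumes "f \<in> set fs"
  shows "peak_cutoff p u x f \<in> Tdom p Z" "peak_cutoff p u x f x = 1"
    "\<forall>z\<in>topspace Z. power_score p [f z, peak_cutoff p u x f z] \<le> power_score p [f x, 1]"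
  using assms fs(2,3) Tdom_peak_cutoff[OF Z u x] peak_cutoff_at[OF Z u x]
    power_score_peak_cutoff[OF Z u x] by auto

lemma peak_list_Tdom: "peak_list p u x fs \<noteq> []" "set (peak_list p u x fs) \<subseteq> Tdom p Z"
  using fs peak_cutoff_in_list(1) by (auto simp: peak_list_def)

lemma peak_list_at: "map (\<lambda>g. g x) (peak_list p u x fs) = concat (map (\<lambda>f. [f x, 1]) fs)"
  using peak_cutoff_in_list(2) by (simp add: map_peak_list cong: map_cong)

lemma supn_pmean_peak_list:
  "supn Z (pmean p (peak_list p u x fs)) = pmean p (peak_list p u x fs) x"
proof (rule supn_pmean_eq_at[OF Z peak_list_Tdom x], intro ballI)
  fix z assume z: "z \<in> topspace Z"
  have "\<forall>f\<in>set fs. power_score p [f z, peak_cutoff p u x f z] \<le> power_score p [f x, 1]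
          \<and> set [f z, peak_cutoff p u x f z] \<subseteq> value_range p"
    using fs(2) z peak_cutoff_in_list(1,3) Tdom_value_range(1)[OF Z] by auto
  then show "power_score p (map (\<lambda>g. g z) (peak_list p u x fs))
      \<le> power_score p (map (\<lambda>g. g x) (peak_list p u x fs))"
    unfolding peak_list_at by (simp add: map_peak_list power_score_concat_mono)
qed

lemma pmean_peak_list_pos: "0 < pmean p (peak_list p u x fs) x"
  unfolding pmean_eq_power_mean peak_list_at
proof (rule power_mean_pos)
  show "set (concat (map (\<lambda>f. [f x, 1]) fs)) \<subseteq> value_range p"
    using fs Tdom_value_range(1)[OF Z] x by auto
  show "1 \<in> set (concat (map (\<lambda>f. [f x, 1]) fs))" using fs(1) by (cases fs) auto
  show "\<forall>v\<in>set (concat (map (\<lambda>f. [f x, 1]) fs)). 0 < v" if "p = 0" using fs(3)[OF that] by auto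
qed

end

section \<open>Maps preserving the norm of power means\<close>

locale pmean_norm_preserving =
  fixes p :: real and X :: "'a topology" and Y :: "'b topology"
    and T :: "('a \<Rightarrow> real) \<Rightarrow> ('b \<Rightarrow> real)"
  assumes Hausdorff_X: "Hausdorff_space X" and Hausdorff_Y: "Hausdorff_space Y"
    and compactness_X: "if p \<ge> 0 then locally_compact_space X else compact_space X"
    and compactness_Y: "if p \<ge> 0 then locally_compact_space Y else compact_space Y"
    and T_Tdom_subset: "T ` Tdom p X \<subseteq> Tdom p Y"
    and supn_pmean_T: "\<And>fs. fs \<noteq> [] \<Longrightarrow> set fs \<subseteq> Tdom p X \<Longrightarrow>
                  supn Y (pmean p (map T fs)) = supn X (pmean p fs)"
begin

lemma domain_space_X: "domain_space p X"
  using Hausdorff_X compactness_X by (simp add: domain_space_def)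

lemma domain_space_Y: "domain_space p Y"
  using Hausdorff_Y compactness_Y by (simp add: domain_space_def)

lemma T_Tdom: "f \<in> Tdom p X \<Longrightarrow> T f \<in> Tdom p Y"
  using T_Tdom_subset by blast

lemma T_value_range: "f \<in> Tdom p X \<Longrightarrow> y \<in> topspace Y \<Longrightarrow> T f y \<in> value_range p"
  using Tdom_value_range(1)[OF domain_space_Y T_Tdom] by blast

lemma power_score_T_pair_le:
  assumes "x \<in> topspace X" "f \<in> Tdom p X" "g \<in> Tdom p X" "g x = 1"
    and "\<forall>z\<in>topspace X. power_score p [f z, g z] \<le> power_score p [f x, 1]" "y \<in> topspace Y"
  shows "power_score p [T f y, T g y] \<le> power_score p [f x, 1]"
proof -
  have "pmean p (map T [f, g]) y \<le> supn Y (pmean p (map T [f, g]))"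
    using assms(2,3,6) T_Tdom by (intro pmean_le_supn[OF domain_space_Y]) auto
  also have "\<dots> = supn X (pmean p [f, g])" using assms(2,3) by (intro supn_pmean_T) auto
  also have "\<dots> = pmean p [f, g] x"
    using assms(1-5) by (intro supn_pmean_eq_at[OF domain_space_X]) auto
  finally have "power_mean p [T f y, T g y] \<le> power_mean p [f x, 1]"
    using assms(4) by (simp add: pmean_eq_power_mean)
  moreover have "f x \<in> value_range p" using Tdom_value_range(1)[OF domain_space_X assms(2)] assms(1) by blast
  ultimately show ?thesis using T_value_range assms(2,3,6) by (subst (asm) power_mean_le_iff_score) auto
qed

lemma finite_dominating_point:
  assumes x: "x \<in> topspace X" and u: "u \<in> Tdom p X" "u x = 1"
    and fs: "fs \<noteq> []" "set fs \<subseteq> Tdom p X" "p = 0 \<Longrightarrow> \<forall>f\<in>set fs. 0 < f x"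
  shows "\<exists>y\<in>topspace Y. \<forall>f\<in>set fs. f x \<le> T f y"
proof -
  let ?L = "peak_list p u x fs" and ?G = "peak_cutoff p u x"
  note L = peak_list_Tdom[OF domain_space_X u x fs]
  note G = peak_cutoff_in_list[OF domain_space_X u x fs]
  define c where "c = pmean p ?L x"
  have "supn Y (pmean p (map T ?L)) = c"
    using supn_pmean_T[OF L] supn_pmean_peak_list[OF domain_space_X u x fs] by (simp add: c_def)
  moreover have "map T ?L \<noteq> []" "set (map T ?L) \<subseteq> Tdom p Y" using L T_Tdom by auto
  moreover have "0 < c" using pmean_peak_list_pos[OF domain_space_X u x fs] by (simp add: c_def)
  ultimately obtain y where y: "y \<in> topspace Y" "pmean p (map T ?L) y = c"
    using pmean_attains_supn[OF domain_space_Y] by blast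
  have TL_y: "map (\<lambda>g. g y) (map T ?L) = concat (map (\<lambda>f. [T f y, T (?G f) y]) fs)"
    by (simp add: map_peak_list map_concat comp_def)
  have "power_mean p (map (\<lambda>g. g y) (map T ?L)) = power_mean p (map (\<lambda>g. g x) ?L)"
    using y(2) by (simp add: c_def pmean_eq_power_mean)
  then have "power_score p (map (\<lambda>g. g y) (map T ?L)) = power_score p (map (\<lambda>g. g x) ?L)"
    using L T_value_range Tdom_values[OF domain_space_X L(2) x] y(1)
    by (subst (asm) power_mean_eq_iff_score) auto
  then have sum_eq: "power_score p (concat (map (\<lambda>f. [T f y, T (?G f) y]) fs))
      = power_score p (concat (map (\<lambda>f. [f x, 1]) fs))"
    using peak_list_at[OF domain_space_X u x fs] unfolding TL_y by simp
  have "\<forall>f\<in>set fs. power_score p [T f y, T (?G f) y] \<le> power_score p [f x, 1]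
      \<and> set [T f y, T (?G f) y] \<subseteq> value_range p \<and> (p = 0 \<longrightarrow> 0 < power_score p [f x, 1])"
    using power_score_T_pair_le[OF x _ _ _ _ y(1)] G fs(2,3) T_value_range y(1)
    by (auto simp: power_score_pair)
  then have "\<forall>f\<in>set fs. power_score p [T f y, T (?G f) y] = power_score p [f x, 1]"
    using sum_eq by (rule power_score_concat_eq_imp_eq)
  then have "f x \<le> T f y" if "f \<in> set fs" for f
    using power_score_pair_le_imp_le[of "T f y" p "T (?G f) y" "f x"] that fs(2) G(1) T_value_range y(1)
      Tdom_value_range(1)[OF domain_space_X] x by (metis order_refl subsetD)
  then show ?thesis using y(1) by blast
qed


lemma exists_peak_at:
  assumes "x \<in> topspace X"
  obtains u where "u \<in> Tdom p X" "u x = 1"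
  using Tdom_bump[OF domain_space_X openin_topspace assms, of "1/2"] by auto

lemma exists_dominating_point:
  assumes x: "x \<in> topspace X"
  shows "\<exists>y\<in>topspace Y. \<forall>f\<in>Tdom p X. (p = 0 \<longrightarrow> 0 < f x) \<longrightarrow> f x \<le> T f y"
proof -
  obtain u where u: "u \<in> Tdom p X" "u x = 1" using exists_peak_at[OF x] .
  define A where "A f = {y \<in> topspace Y. f x \<le> T f y}" for f
  define \<F> where "\<F> = A ` {f \<in> Tdom p X. p = 0 \<longrightarrow> 0 < f x}"
  have closed: "\<forall>C\<in>\<F>. closedin Y C"
    unfolding \<F>_def A_def using closedin_superlevel[OF Tdom_continuous[OF T_Tdom]] by blast
  have compact: "compactin Y (A u)"
    unfolding A_def using Tdom_superlevel_compact[OF domain_space_Y T_Tdom[OF u(1)], of 1] u(2) by simp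
  have "A u \<inter> \<Inter>\<G> \<noteq> {}" if \<G>: "finite \<G>" "\<G> \<subseteq> \<F>" for \<G>
  proof -
    obtain Fs where Fs: "Fs \<subseteq> {f \<in> Tdom p X. p = 0 \<longrightarrow> 0 < f x}" "finite Fs" "\<G> = A ` Fs"
      using \<G> unfolding \<F>_def by (meson finite_subset_image)
    obtain fs where "set fs = Fs" using finite_list[OF Fs(2)] by blast
    then obtain y where "y \<in> topspace Y" "\<forall>f\<in>set (u # fs). f x \<le> T f y"
      using finite_dominating_point[OF x u, of "u # fs"] Fs(1) u by auto
    then have "y \<in> A u \<inter> \<Inter>\<G>" using Fs(3) \<open>set fs = Fs\<close> by (auto simp: A_def)
    then show ?thesis by blast
  qed
  then have "A u \<inter> \<Inter>\<F> \<noteq> {}" using compact closed unfolding compactin_fip by blast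
  then show ?thesis unfolding \<F>_def A_def by blast
qed

lemma T_eq_at_dominating_point:
  assumes x: "x \<in> topspace X" and y: "y \<in> topspace Y"
    and dom: "\<forall>f\<in>Tdom p X. (p = 0 \<longrightarrow> 0 < f x) \<longrightarrow> f x \<le> T f y"
    and f: "f \<in> Tdom p X" "p = 0 \<longrightarrow> 0 < f x"
  shows "T f y = f x"
proof -
  obtain u where u: "u \<in> Tdom p X" "u x = 1" using exists_peak_at[OF x] .
  let ?G = "peak_cutoff p u x f"
  have G: "?G \<in> Tdom p X" "?G x = 1"
    "\<forall>z\<in>topspace X. power_score p [f z, ?G z] \<le> power_score p [f x, 1]"
    using Tdom_peak_cutoff[OF domain_space_X u x f(1)] peak_cutoff_at[OF domain_space_X u x f(1)]
      power_score_peak_cutoff[OF domain_space_X u x f(1)] f(2) by auto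
  have "1 \<le> T ?G y" using dom G(1,2) by auto
  moreover have "T ?G y \<le> 1" using Tdom_le_1[OF domain_space_Y T_Tdom[OF G(1)]] .
  ultimately have "T ?G y = 1" by simp
  then have "power_score p [T f y, 1] \<le> power_score p [f x, 1]"
    using power_score_T_pair_le[OF x f(1) G y] by simp
  then have "T f y \<le> f x"
    using power_score_pair_le_imp_le[of "f x" p 1 "T f y"] T_value_range[OF f(1) y]
      Tdom_value_range(1)[OF domain_space_X f(1)] x by auto
  then show ?thesis using dom f by fastforce
qed

text \<open>For \<open>p = 0\<close> a zero of \<open>f\<close> carries no information through \<open>f x \<le> T f y\<close>;
  instead the geometric mean of \<open>f\<close> with a bump supported where \<open>f < d\<close> is at most \<open>\<surd>d\<close>.\<close>

lemma T_eq_zero_at_dominating_point: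
  assumes p: "p = 0" and x: "x \<in> topspace X" and y: "y \<in> topspace Y"
    and dom: "\<forall>f\<in>Tdom p X. (p = 0 \<longrightarrow> 0 < f x) \<longrightarrow> f x \<le> T f y"
    and f: "f \<in> Tdom p X" "f x = 0"
  shows "T f y = 0"
proof (rule ccontr)
  assume "T f y \<noteq> 0"
  then have pos: "0 < T f y" using Tdom_nonneg[OF T_Tdom[OF f(1)] y] by simp
  define d where "d = min (T f y / 2) (1/2)"
  have d: "0 < d" "d < T f y" "d \<in> value_range p" using pos p by (auto simp: d_def value_range_def)
  let ?W = "{z \<in> topspace X. f z < d}"
  have "openin X ?W" using openin_strict_sublevel[OF Tdom_continuous[OF f(1)]] .
  moreover have "x \<in> ?W" using x f(2) d(1) by simp
  ultimately obtain v where v: "v \<in> Tdom p X" "v x = 1" "\<forall>z. z \<notin> ?W \<longrightarrow> v z = 0"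
    using Tdom_bump[OF domain_space_X, of ?W x "1/2"] p by auto
  have "1 \<le> T v y" using dom v(1,2) by auto
  then have Tv: "T v y = 1" using Tdom_le_1[OF domain_space_Y T_Tdom[OF v(1)]] by (simp add: antisym)
  have "power_mean p [f z, v z] \<le> power_mean p [d, 1]" if z: "z \<in> topspace X" for z
  proof -
    have fz: "f z \<in> value_range p" and vz: "v z \<in> value_range p"
      using Tdom_value_range(1)[OF domain_space_X] f(1) v(1) z by blast+
    have "f z * v z \<le> d"
    proof (cases "f z < d")
      case True
      then show ?thesis using fz vz value_range_nonneg value_range_le_1 by (smt (verit) mult_left_le)
    next
      case False
      then show ?thesis using v(3) d(1) by auto
    qed
    then have "power_score p [f z, v z] \<le> power_score p [d, 1]" using p by (simp add: power_score_pair)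
    then show ?thesis using fz vz d(3) by (subst power_mean_le_iff_score) auto
  qed
  then have "supn X (pmean p [f, v]) \<le> power_mean p [d, 1]"
    using x power_mean_nonneg by (intro supn_le) (auto simp: pmean_eq_power_mean)
  moreover have "pmean p (map T [f, v]) y \<le> supn Y (pmean p (map T [f, v]))"
    using f(1) v(1) y T_Tdom by (intro pmean_le_supn[OF domain_space_Y]) auto
  moreover have "supn Y (pmean p (map T [f, v])) = supn X (pmean p [f, v])"
    using f(1) v(1) by (intro supn_pmean_T) auto
  ultimately have "power_mean p [T f y, 1] \<le> power_mean p [d, 1]"
    using Tv by (simp add: pmean_eq_power_mean)
  then have "power_score p [T f y, 1] \<le> power_score p [d, 1]"
    using T_value_range[OF f(1) y] d(3) by (subst (asm) power_mean_le_iff_score) auto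
  then show False using p d(2) by (simp add: power_score_pair)
qed

lemma exists_representing_point:
  assumes "x \<in> topspace X"
  shows "\<exists>y\<in>topspace Y. \<forall>f\<in>Tdom p X. T f y = f x"
proof -
  obtain y where y: "y \<in> topspace Y" and dom: "\<forall>f\<in>Tdom p X. (p = 0 \<longrightarrow> 0 < f x) \<longrightarrow> f x \<le> T f y"
    using exists_dominating_point[OF assms] by blast
  have "T f y = f x" if f: "f \<in> Tdom p X" for f
  proof (cases "p = 0 \<longrightarrow> 0 < f x")
    case True
    then show ?thesis using T_eq_at_dominating_point[OF assms y dom f] by blast
  next
    case False
    then have "p = 0" "f x = 0" using Tdom_nonneg[OF f assms] by auto
    then show ?thesis using T_eq_zero_at_dominating_point[OF _ assms y dom f] by simp
  qed
  then show ?thesis using y by blast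
qed


definition represented :: "'a set \<Rightarrow> 'b set" where
  "represented C = {y \<in> topspace Y. \<exists>x\<in>C. \<forall>f\<in>Tdom p X. T f y = f x}"

definition Y0 :: "'b set" where
  "Y0 = represented (topspace X)"

definition tau :: "'b \<Rightarrow> 'a" where
  "tau y = (THE x. x \<in> topspace X \<and> (\<forall>f\<in>Tdom p X. T f y = f x))"

lemma Y0_subset: "Y0 \<subseteq> topspace Y"
  by (auto simp: Y0_def represented_def)

lemma represented_subset_Y0: "C \<subseteq> topspace X \<Longrightarrow> represented C \<subseteq> Y0"
  by (auto simp: Y0_def represented_def)

lemma tau_eqI:
  assumes "y \<in> topspace Y" "x \<in> topspace X" "\<forall>f\<in>Tdom p X. T f y = f x"
  shows "y \<in> Y0" "tau y = x"
proof -
  show "y \<in> Y0" using assms by (auto simp: Y0_def represented_def)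
  show "tau y = x"
    unfolding tau_def
  proof (rule the_equality)
    show "x \<in> topspace X \<and> (\<forall>f\<in>Tdom p X. T f y = f x)" using assms(2,3) by blast
    show "x' = x" if "x' \<in> topspace X \<and> (\<forall>f\<in>Tdom p X. T f y = f x')" for x'
      using Tdom_separates_points[OF domain_space_X _ assms(2), of x'] that assms(3) by metis
  qed
qed

lemma tau_Y0:
  assumes "y \<in> Y0"
  shows "tau y \<in> topspace X" "\<forall>f\<in>Tdom p X. T f y = f (tau y)"
proof -
  obtain x where "y \<in> topspace Y" "x \<in> topspace X" "\<forall>f\<in>Tdom p X. T f y = f x"
    using assms by (auto simp: Y0_def represented_def)
  then show "tau y \<in> topspace X" "\<forall>f\<in>Tdom p X. T f y = f (tau y)" using tau_eqI by auto
qed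

lemma tau_image: "tau ` Y0 = topspace X"
proof
  show "tau ` Y0 \<subseteq> topspace X" using tau_Y0(1) by blast
  show "topspace X \<subseteq> tau ` Y0"
  proof
    fix x assume x: "x \<in> topspace X"
    obtain y where "y \<in> topspace Y" "\<forall>f\<in>Tdom p X. T f y = f x"
      using exists_representing_point[OF x] by blast
    then show "x \<in> tau ` Y0" using tau_eqI[of y x] x by force
  qed
qed

text \<open>The points represented by a compact \<open>C\<close> are the projection of a closed subset of
  \<open>Y \<times> C\<close>, and projections along compact factors are closed maps.\<close>

lemma closedin_represented:
  assumes "compactin X C"
  shows "closedin Y (represented C)"
proof -
  let ?P = "prod_topology Y (subtopology X C)"
  let ?S = "\<lambda>f. {q \<in> topspace ?P. T f (fst q) = f (snd q)}"
  define E where "E = {q \<in> topspace ?P. \<forall>f\<in>Tdom p X. T f (fst q) = f (snd q)}"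
  have S_closed: "closedin ?P (?S f)" if f: "f \<in> Tdom p X" for f
  proof -
    have "continuous_map ?P euclideanreal (\<lambda>q. T f (fst q) - f (snd q))"
      using Tdom_continuous[OF T_Tdom[OF f]] Tdom_continuous[OF f]
      by (intro continuous_map_diff continuous_map_compose[OF continuous_map_fst, unfolded o_def]
          continuous_map_compose[OF continuous_map_snd, unfolded o_def] continuous_map_from_subtopology)
    from closedin_continuous_map_preimage[OF this, of "{0}"] show ?thesis by simp
  qed
  have E_eq: "E = \<Inter>(insert (topspace ?P) (?S ` Tdom p X))" by (auto simp: E_def)
  have "closedin ?P E"
    unfolding E_eq
  proof (rule closedin_Inter)
    fix S assume "S \<in> insert (topspace ?P) (?S ` Tdom p X)"
    then show "closedin ?P S"
    proof
      assume "S \<in> ?S ` Tdom p X"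
      then obtain f where "f \<in> Tdom p X" "S = ?S f" by blast
      then show ?thesis using S_closed by simp
    qed (simp only: closedin_topspace)
  qed simp
  moreover have "closed_map ?P Y fst"
    using closed_map_fst compact_space_subtopology[OF assms] by blast
  ultimately have "closedin Y (fst ` E)" by (simp add: closed_map_def)
  moreover have "fst ` E = represented C"
  proof
    show "fst ` E \<subseteq> represented C" by (auto simp: E_def represented_def)
    show "represented C \<subseteq> fst ` E"
    proof
      fix y assume "y \<in> represented C"
      then obtain x where "y \<in> topspace Y" "x \<in> C" "\<forall>f\<in>Tdom p X. T f y = f x"
        by (auto simp: represented_def)
      then have "(y, x) \<in> E" using compactin_subset_topspace[OF assms] by (auto simp: E_def)
      then show "y \<in> fst ` E" by (metis fst_conv image_eqI)
    qed
  qed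
  ultimately show ?thesis by simp
qed

lemma closedin_Y0: "compact_space X \<Longrightarrow> closedin Y Y0"
  using closedin_represented[of "topspace X"] by (simp add: compact_space_def Y0_def)

lemma continuous_map_tau: "continuous_map (subtopology Y Y0) X tau"
  unfolding continuous_map_def
proof (intro conjI allI impI)
  have top: "topspace (subtopology Y Y0) = Y0" using Y0_subset by auto
  show "tau \<in> topspace (subtopology Y Y0) \<rightarrow> topspace X" using top tau_Y0(1) by auto
  fix U assume U: "openin X U"
  show "openin (subtopology Y Y0) {y \<in> topspace (subtopology Y Y0). tau y \<in> U}"
  proof (subst openin_subopen, intro ballI)
    fix y assume "y \<in> {y \<in> topspace (subtopology Y Y0). tau y \<in> U}"
    then have y: "y \<in> Y0" "tau y \<in> U" using top by auto
    obtain f where f: "f \<in> Tdom p X" "f (tau y) = 1" "\<And>z. z \<in> topspace X \<Longrightarrow> z \<notin> U \<Longrightarrow> f z \<le> 1/2"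
    proof (rule Tdom_bump[OF domain_space_X U y(2), of "1/2"])
      fix u assume "u \<in> Tdom p X" "u (tau y) = 1" "\<And>z. z \<in> topspace X \<Longrightarrow> z \<notin> U \<Longrightarrow> u z \<le> 1/2"
      then show thesis by (rule that)
    qed simp_all
    define N where "N = {y' \<in> topspace Y. 1/2 < T f y'}"
    have "openin Y N" unfolding N_def by (rule openin_strict_superlevel[OF Tdom_continuous[OF T_Tdom[OF f(1)]]])
    then have "openin (subtopology Y Y0) (N \<inter> Y0)" by (rule openin_subtopology_Int)
    moreover have "y \<in> N \<inter> Y0" using y tau_Y0[OF y(1)] f(1,2) Y0_subset by (auto simp: N_def)
    moreover have "tau y' \<in> U" if "y' \<in> N \<inter> Y0" for y'
      using that f(1,3) tau_Y0[of y'] by (force simp: N_def)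
    ultimately show "\<exists>S. openin (subtopology Y Y0) S \<and> y \<in> S \<and> S \<subseteq> {y \<in> topspace (subtopology Y Y0). tau y \<in> U}"
      using top by blast
  qed
qed

lemma locally_compact_Y0: "locally_compact_space (subtopology Y Y0)"
  unfolding locally_compact_space_def
proof
  fix y assume "y \<in> topspace (subtopology Y Y0)"
  then have y: "y \<in> Y0" using Y0_subset by auto
  obtain f where f: "f \<in> Tdom p X" "f (tau y) = 1" using exists_peak_at[OF tau_Y0(1)[OF y]] .
  define C where "C = {x \<in> topspace X. 1/2 \<le> f x}"
  define K where "K = represented C \<inter> {y' \<in> topspace Y. 1/2 \<le> T f y'}"
  define U where "U = {y' \<in> topspace Y. 1/2 < T f y'} \<inter> Y0"
  have "compactin X C" unfolding C_def by (rule Tdom_superlevel_compact[OF domain_space_X f(1)]) simp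
  then have "closedin Y K" unfolding K_def
    using closedin_represented closedin_superlevel[OF Tdom_continuous[OF T_Tdom[OF f(1)]]] by blast
  moreover have "compactin Y {y' \<in> topspace Y. 1/2 \<le> T f y'}"
    by (rule Tdom_superlevel_compact[OF domain_space_Y T_Tdom[OF f(1)]]) simp
  moreover have "K \<subseteq> {y' \<in> topspace Y. 1/2 \<le> T f y'}" by (auto simp: K_def)
  ultimately have "compactin Y K" using closed_compactin by blast
  moreover have "K \<subseteq> Y0" unfolding K_def using represented_subset_Y0[of C] by (auto simp: C_def)
  ultimately have "compactin (subtopology Y Y0) K" by (simp add: compactin_subtopology)
  moreover have "openin (subtopology Y Y0) U" unfolding U_def
    by (rule openin_subtopology_Int[OF openin_strict_superlevel[OF Tdom_continuous[OF T_Tdom[OF f(1)]]]])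
  moreover have "y \<in> U" using y tau_Y0[OF y] f Y0_subset by (auto simp: U_def)
  moreover have "U \<subseteq> K"
  proof
    fix y' assume "y' \<in> U"
    then have y': "y' \<in> Y0" "1/2 < T f y'" "y' \<in> topspace Y" by (auto simp: U_def)
    then have "tau y' \<in> C" using tau_Y0[OF y'(1)] f(1) by (auto simp: C_def)
    then have "y' \<in> represented C" using tau_Y0[OF y'(1)] y'(3) by (auto simp: represented_def)
    then show "y' \<in> K" using y' by (auto simp: K_def)
  qed
  ultimately show "\<exists>U K. openin (subtopology Y Y0) U \<and> compactin (subtopology Y Y0) K \<and> y \<in> U \<and> U \<subseteq> K"
    by blast
qed

end

section \<open>Composition with a homeomorphism\<close>

lemma C0c_compose_homeomorphic_maps:
  assumes "homeomorphic_maps Y X \<tau> \<sigma>" "f \<in> C0c X"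
  shows "(\<lambda>y. if y \<in> topspace Y then f (\<tau> y) else 0) \<in> C0c Y"
proof -
  let ?g = "\<lambda>y. if y \<in> topspace Y then f (\<tau> y) else 0"
  have \<tau>: "continuous_map Y X \<tau>" and \<sigma>: "continuous_map X Y \<sigma>"
    and \<sigma>\<tau>: "\<And>y. y \<in> topspace Y \<Longrightarrow> \<sigma> (\<tau> y) = y" and \<tau>\<sigma>: "\<And>x. x \<in> topspace X \<Longrightarrow> \<tau> (\<sigma> x) = x"
    using assms(1) by (auto simp: homeomorphic_maps_def)
  have \<tau>Y: "\<And>y. y \<in> topspace Y \<Longrightarrow> \<tau> y \<in> topspace X"
    and \<sigma>X: "\<And>x. x \<in> topspace X \<Longrightarrow> \<sigma> x \<in> topspace Y"
    using continuous_map_image_subset_topspace[OF \<tau>] continuous_map_image_subset_topspace[OF \<sigma>] by blast+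
  have "continuous_map X euclidean f" using assms(2) by (simp add: C0c_def)
  then have "continuous_map Y euclidean ?g"
    by (rule continuous_map_eq[OF continuous_map_compose[OF \<tau>]]) auto
  moreover have "{y \<in> topspace Y. e \<le> cmod (?g y)} = \<sigma> ` {x \<in> topspace X. e \<le> cmod (f x)}" for e
  proof
    show "{y \<in> topspace Y. e \<le> cmod (?g y)} \<subseteq> \<sigma> ` {x \<in> topspace X. e \<le> cmod (f x)}"
    proof
      fix y assume "y \<in> {y \<in> topspace Y. e \<le> cmod (?g y)}"
      then have "y = \<sigma> (\<tau> y)" "\<tau> y \<in> {x \<in> topspace X. e \<le> cmod (f x)}" using \<sigma>\<tau> \<tau>Y by auto
      then show "y \<in> \<sigma> ` {x \<in> topspace X. e \<le> cmod (f x)}" by blast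
    qed
    show "\<sigma> ` {x \<in> topspace X. e \<le> cmod (f x)} \<subseteq> {y \<in> topspace Y. e \<le> cmod (?g y)}"
      using \<sigma>X \<tau>\<sigma> by auto
  qed
  moreover have "compactin Y (\<sigma> ` {x \<in> topspace X. e \<le> cmod (f x)})" if "e > 0" for e
    using image_compactin[OF _ \<sigma>] assms(2) that by (simp add: C0c_def)
  ultimately show ?thesis by (simp add: C0c_def)
qed

lemma bij_betw_C0c_compose_homeomorphic_map:
  assumes "homeomorphic_map Y X \<tau>"
  shows "bij_betw (\<lambda>f y. if y \<in> topspace Y then f (\<tau> y) else 0) (C0c X) (C0c Y)"
proof -
  let ?\<Phi> = "\<lambda>f y. if y \<in> topspace Y then f (\<tau> y) else 0 :: complex"
  obtain \<sigma> where maps: "homeomorphic_maps Y X \<tau> \<sigma>" using assms homeomorphic_map_maps by blast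
  then have maps': "homeomorphic_maps X Y \<sigma> \<tau>" using homeomorphic_maps_sym by blast
  have \<sigma>\<tau>: "\<And>y. y \<in> topspace Y \<Longrightarrow> \<sigma> (\<tau> y) = y" and \<tau>\<sigma>: "\<And>x. x \<in> topspace X \<Longrightarrow> \<tau> (\<sigma> x) = x"
    using maps by (auto simp: homeomorphic_maps_def)
  have \<tau>Y: "\<And>y. y \<in> topspace Y \<Longrightarrow> \<tau> y \<in> topspace X"
    and \<sigma>X: "\<And>x. x \<in> topspace X \<Longrightarrow> \<sigma> x \<in> topspace Y"
    using maps continuous_map_image_subset_topspace unfolding homeomorphic_maps_def by blast+
  have "inj_on ?\<Phi> (C0c X)"
  proof (rule inj_onI, rule ext)
    fix f g x assume f: "f \<in> C0c X" and g: "g \<in> C0c X" and eq: "?\<Phi> f = ?\<Phi> g"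
    show "f x = g x"
    proof (cases "x \<in> topspace X")
      case True
      then show ?thesis using fun_cong[OF eq, of "\<sigma> x"] \<sigma>X \<tau>\<sigma> by simp
    qed (use f g in \<open>simp add: C0c_def\<close>)
  qed
  moreover have "C0c Y \<subseteq> ?\<Phi> ` C0c X"
  proof
    fix h assume h: "h \<in> C0c Y"
    define f where "f = (\<lambda>x. if x \<in> topspace X then h (\<sigma> x) else 0)"
    have "?\<Phi> f = h"
    proof
      fix y show "?\<Phi> f y = h y"
        using h \<tau>Y \<sigma>\<tau> by (cases "y \<in> topspace Y") (simp_all add: f_def C0c_def)
    qed
    moreover have "f \<in> C0c X" unfolding f_def by (rule C0c_compose_homeomorphic_maps[OF maps' h])
    ultimately show "h \<in> ?\<Phi> ` C0c X" by blast
  qed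
  moreover have "?\<Phi> ` C0c X \<subseteq> C0c Y" using C0c_compose_homeomorphic_maps[OF maps] by blast
  ultimately show ?thesis by (simp add: bij_betw_def)
qed

lemma star_alg_iso_compose_homeomorphic_map:
  "homeomorphic_map Y X \<tau> \<Longrightarrow> star_alg_iso X Y (\<lambda>f y. if y \<in> topspace Y then f (\<tau> y) else 0)"
  using bij_betw_C0c_compose_homeomorphic_map by (auto simp: star_alg_iso_def fun_eq_iff)

section \<open>Maps with dense range\<close>

locale pmean_norm_preserving_dense = pmean_norm_preserving +
  assumes dense_range: "\<forall>g \<in> Tdom p Y. \<forall>e>0. \<exists>f \<in> Tdom p X. supn Y (\<lambda>y. T f y - g y) < e"
begin

lemma exists_T_bump:
  assumes "openin Y W" "y \<in> W"
  obtains f where "f \<in> Tdom p X" "1/2 < T f y" "\<And>z. z \<in> topspace Y \<Longrightarrow> z \<notin> W \<Longrightarrow> T f z < 1/2"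
proof -
  obtain g where g: "g \<in> Tdom p Y" "g y = 1" "\<And>z. z \<in> topspace Y \<Longrightarrow> z \<notin> W \<Longrightarrow> g z \<le> 1/4"
  proof (rule Tdom_bump[OF domain_space_Y assms, of "1/4"])
    fix u assume "u \<in> Tdom p Y" "u y = 1" "\<And>z. z \<in> topspace Y \<Longrightarrow> z \<notin> W \<Longrightarrow> u z \<le> 1/4"
    then show thesis by (rule that)
  qed simp_all
  obtain f where f: "f \<in> Tdom p X" "supn Y (\<lambda>y. T f y - g y) < 1/4"
    using dense_range g(1) by (meson divide_pos_pos zero_less_one zero_less_numeral)
  have approx: "\<bar>T f z - g z\<bar> < 1/4" if z: "z \<in> topspace Y" for z
  proof -
    have "\<bar>T f z - g z\<bar> \<le> 1" if "z \<in> topspace Y" for z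
    proof -
      have "T f z \<in> value_range p" "g z \<in> value_range p"
        using T_value_range[OF f(1) that] Tdom_value_range(1)[OF domain_space_Y g(1)] that by auto
      then show ?thesis
        using value_range_nonneg value_range_le_1 unfolding abs_le_iff by (smt (verit))
    qed
    then have "\<bar>T f z - g z\<bar> \<le> supn Y (\<lambda>y. T f y - g y)" using z by (intro abs_le_supn) auto
    then show ?thesis using f(2) by linarith
  qed
  show ?thesis
  proof (rule that[OF f(1)])
    have "y \<in> topspace Y" using assms openin_subset by blast
    then show "1/2 < T f y" using approx[of y] g(2) by arith
    show "T f z < 1/2" if "z \<in> topspace Y" "z \<notin> W" for z
      using approx[OF that(1)] g(3)[OF that] by arith
  qed
qed

lemma Y0_eq_topspace: "Y0 = topspace Y"
proof
  show "topspace Y \<subseteq> Y0"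
  proof
    fix y assume y: "y \<in> topspace Y"
    obtain f0 where f0: "f0 \<in> Tdom p X" "1/2 < T f0 y"
      using exists_T_bump[OF openin_topspace y] by blast
    define C where "C = {x \<in> topspace X. 1/2 \<le> f0 x}"
    have "compactin X C" unfolding C_def by (rule Tdom_superlevel_compact[OF domain_space_X f0(1)]) simp
    text \<open>If \<open>y\<close> were not represented by a point of \<open>C\<close>, a function of the range peaking
      near \<open>y\<close> would have its maximum, which is attained on \<open>Y0\<close>, away from \<open>C\<close>.\<close>
    have "y \<in> represented C"
    proof (rule ccontr)
      assume y_notin: "y \<notin> represented C"
      define V where "V = (topspace Y - represented C) \<inter> {y' \<in> topspace Y. 1/2 < T f0 y'}"
      have "openin Y (topspace Y - represented C)"
        using closedin_represented[OF \<open>compactin X C\<close>] by (simp add: closedin_def)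
      moreover have "openin Y {y' \<in> topspace Y. 1/2 < T f0 y'}"
        by (rule openin_strict_superlevel[OF Tdom_continuous[OF T_Tdom[OF f0(1)]]])
      ultimately have "openin Y V" unfolding V_def by (rule openin_Int)
      moreover have "y \<in> V" using y y_notin f0(2) by (simp add: V_def)
      ultimately obtain f1 where f1: "f1 \<in> Tdom p X"
          "\<And>z. z \<in> topspace Y \<Longrightarrow> z \<notin> V \<Longrightarrow> T f1 z < 1/2"
        using exists_T_bump by metis
      obtain x1 where x1: "x1 \<in> topspace X" "f1 x1 = 1"
        using Tdom_value_range(2)[OF domain_space_X f1(1)] by blast
      then obtain y1 where y1: "y1 \<in> Y0" "tau y1 = x1" using tau_image by (metis imageE)
      then have y1_top: "y1 \<in> topspace Y" using Y0_subset by blast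
      have "T f1 y1 = 1" using tau_Y0(2)[OF y1(1)] f1(1) y1(2) x1(2) by auto
      then have "y1 \<in> V" using f1(2)[OF y1_top] by force
      then have "1/2 < f0 (tau y1)" using tau_Y0(2)[OF y1(1)] f0(1) by (auto simp: V_def)
      then have "y1 \<in> represented C"
        using tau_Y0[OF y1(1)] y1_top by (auto simp: C_def represented_def)
      then show False using \<open>y1 \<in> V\<close> by (simp add: V_def)
    qed
    then show "y \<in> Y0" using represented_subset_Y0[of C] by (auto simp: C_def)
  qed
qed (rule Y0_subset)

lemma T_eq_tau: "f \<in> Tdom p X \<Longrightarrow> y \<in> topspace Y \<Longrightarrow> T f y = f (tau y)"
  using tau_Y0(2) Y0_eq_topspace by blast

lemma inj_on_tau: "inj_on tau (topspace Y)"
proof (rule inj_onI, rule ccontr)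
  fix y1 y2 assume y: "y1 \<in> topspace Y" "y2 \<in> topspace Y" "tau y1 = tau y2" "y1 \<noteq> y2"
  have "t1_space Y" using Hausdorff_imp_t1_space[OF Hausdorff_Y] .
  then have "closedin Y {y2}" using y(2) by (rule closedin_t1_singleton)
  then have "openin Y (topspace Y - {y2})" by (simp add: closedin_def)
  then obtain f where "f \<in> Tdom p X" "1/2 < T f y1" "T f y2 < 1/2"
    using exists_T_bump[of "topspace Y - {y2}" y1] y by (metis Diff_iff singletonD singletonI)
  then show False using T_eq_tau y by fastforce
qed

lemma open_map_tau: "open_map Y X tau"
  unfolding open_map_def
proof (intro allI impI)
  fix U assume U: "openin Y U"
  show "openin X (tau ` U)"
  proof (subst openin_subopen, intro ballI)
    fix x assume "x \<in> tau ` U"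
    then obtain y where y: "y \<in> U" "x = tau y" by blast
    then have y_top: "y \<in> topspace Y" using U openin_subset by blast
    obtain f where f: "f \<in> Tdom p X" "1/2 < T f y" "\<And>z. z \<in> topspace Y \<Longrightarrow> z \<notin> U \<Longrightarrow> T f z < 1/2"
      using exists_T_bump[OF U y(1)] by metis
    define N where "N = {x' \<in> topspace X. 1/2 < f x'}"
    have "openin X N" unfolding N_def by (rule openin_strict_superlevel[OF Tdom_continuous[OF f(1)]])
    moreover have "x \<in> N" using f(1,2) y y_top T_eq_tau tau_Y0(1) Y0_eq_topspace by (auto simp: N_def)
    moreover have "N \<subseteq> tau ` U"
    proof
      fix x' assume x': "x' \<in> N"
      then obtain y' where y': "y' \<in> topspace Y" "x' = tau y'"
        using tau_image Y0_eq_topspace by (auto simp: N_def)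
      then have "1/2 < T f y'" using x' T_eq_tau[OF f(1)] by (simp add: N_def)
      then have "y' \<in> U" using f(3) y'(1) by force
      then show "x' \<in> tau ` U" using y'(2) by blast
    qed
    ultimately show "\<exists>N. openin X N \<and> x \<in> N \<and> N \<subseteq> tau ` U" by blast
  qed
qed

lemma homeomorphic_map_tau: "homeomorphic_map Y X tau"
proof (rule bijective_open_imp_homeomorphic_map)
  show "continuous_map Y X tau" using continuous_map_tau Y0_eq_topspace by simp
  show "tau ` topspace Y = topspace X" using tau_image Y0_eq_topspace by simp
qed (use open_map_tau inj_on_tau in auto)

end

theorem mainTheorem11:
  fixes p :: real and X :: "'a topology" and Y :: "'b topology"
    and T :: "('a \<Rightarrow> real) \<Rightarrow> ('b \<Rightarrow> real)"
  assumes HX: "Hausdorff_space X" and HY: "Hausdorff_space Y"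
    and spX: "if p \<ge> 0 then locally_compact_space X else compact_space X"
    and spY: "if p \<ge> 0 then locally_compact_space Y else compact_space Y"
    and Tmap: "T ` Tdom p X \<subseteq> Tdom p Y"
    and Tpres: "\<And>fs. fs \<noteq> [] \<Longrightarrow> set fs \<subseteq> Tdom p X \<Longrightarrow>
                  supn Y (pmean p (map T fs)) = supn X (pmean p fs)"
  shows "\<exists>Y0 \<tau>. Y0 \<subseteq> topspace Y
           \<and> locally_compact_space (subtopology Y Y0)
           \<and> (compact_space X \<longrightarrow> closedin Y Y0)
           \<and> continuous_map (subtopology Y Y0) X \<tau>
           \<and> \<tau> ` Y0 = topspace X
           \<and> (\<forall>f \<in> Tdom p X. \<forall>y \<in> Y0. T f y = f (\<tau> y))
           \<and> ((\<forall>g \<in> Tdom p Y. \<forall>e>0. \<exists>f \<in> Tdom p X. supn Y (\<lambda>y. T f y - g y) < e)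
               \<longrightarrow> Y0 = topspace Y
                 \<and> homeomorphic_map Y X \<tau>
                 \<and> star_alg_iso X Y (\<lambda>f y. if y \<in> topspace Y then f (\<tau> y) else 0)
                 \<and> (\<forall>f \<in> Tdom p X. (\<lambda>y. complex_of_real (T f y)) =
                       (\<lambda>y. if y \<in> topspace Y then complex_of_real (f (\<tau> y)) else 0)))"
proof -
  interpret pmean_norm_preserving p X Y T
    using HX HY spX spY Tmap Tpres by (rule pmean_norm_preserving.intro)
  show ?thesis
  proof (intro exI[of _ Y0] exI[of _ tau] conjI impI)
    show "Y0 \<subseteq> topspace Y" by (rule Y0_subset)
    show "locally_compact_space (subtopology Y Y0)" by (rule locally_compact_Y0)
    show "closedin Y Y0" if "compact_space X" using closedin_Y0 that .
    show "continuous_map (subtopology Y Y0) X tau" by (rule continuous_map_tau)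
    show "tau ` Y0 = topspace X" by (rule tau_image)
    show "\<forall>f \<in> Tdom p X. \<forall>y \<in> Y0. T f y = f (tau y)" using tau_Y0(2) by blast
    assume "\<forall>g \<in> Tdom p Y. \<forall>e>0. \<exists>f \<in> Tdom p X. supn Y (\<lambda>y. T f y - g y) < e"
    then interpret pmean_norm_preserving_dense p X Y T by unfold_locales
    show "Y0 = topspace Y" by (rule Y0_eq_topspace)
    show "homeomorphic_map Y X tau" by (rule homeomorphic_map_tau)
    show "star_alg_iso X Y (\<lambda>f y. if y \<in> topspace Y then f (tau y) else 0)"
      by (rule star_alg_iso_compose_homeomorphic_map[OF homeomorphic_map_tau])
    show "\<forall>f \<in> Tdom p X. (\<lambda>y. complex_of_real (T f y)) =
        (\<lambda>y. if y \<in> topspace Y then complex_of_real (f (tau y)) else 0)"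
      using T_eq_tau Tdom_outside[OF T_Tdom] by (auto simp: fun_eq_iff)
  qed
qed

end
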